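(* Suppose assumptions (A1)–(A5) below hold. Then the feasible region of the maximum likelihood estimation problem $$\max_{(x_t,\theta_t,u_t)}\ \sum_{i=0}^{n_x}\log p_\nu(\tilde x_{t_i}-Dx_{t_i})+\sum_{j=0}^{n_u}\log p_\omega(\tilde y_{\tau_j}-Cu_{\tau_j})$$ subject to, for all $t$: $u_t\in\arg\max\{f(x_{t+1},u,\theta_t,\pi_t): x_{t+1}=h(x_t,u),\ u\in\mathcal U\}$, $x_{t+1}=h(x_t,u_t)$, $\theta_{t+1}=g(x_t,u_t,\theta_t,\pi_t)$, $x_t\in\mathcal X$, $\theta_t\in\Theta$, can be formulated as a set of mixed integer linear constraints with respect to $(x_t,u_t,\theta_t,\pi_t)$ (possibly with additional auxiliary variables).
   Context: Model. Let $\mathcal X,\mathcal U,\Pi,\Theta$ be compact finite-dimensional sets with $\mathcal X,\mathcal U,\Theta$ convex. At each discrete time $t$ an agent has system state $x_t\in\mathcal X$, motivational state $\theta_t\in\Theta$, decision $u_t\in\mathcal U$; a coordinator applies incentive $\pi_t\in\Pi$. Decisions and states obey the constraints displayed in the claim. Observations: $\tilde x_{t_i}=Dx_{t_i}+\nu_{t_i}$ ($i=0,\dots,n_x$), $\tilde y_{\tau_i}=Cu_{\tau_i}+\omega_{\tau_i}$ ($i=0,\dots,n_u$), $C,D$ known matrices, $p_\nu,p_\omega$ the noise densities. $(a;b)$ denotes vertical concatenation. Assumptions: (A1) $\mathcal X,\mathcal U,\Pi,\Theta$ bounded finite-dimensional; $\mathcal X,\mathcal U,\Theta$ convex polyhedra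 described by finitely many linear inequalities; $\Pi$ described by finitely many mixed integer linear constraints. (A2) $f:\mathcal X\times\mathcal U\times\Theta\times\Pi\to\mathbb R$ deterministic, concave in $x$, strictly concave in $u$, concave in $\theta$, and $f(x,u,\theta,\pi)=-(x;u)^TQ(x;u)+(\theta;\pi)^TH(x;u)+\sum_{i=1}^K\min_{j\in J_i}\{F_{i,j}(x;u;\theta;\pi)+\zeta_{i,j}\}$ with $Q$ positive semidefinite, matrices $H,F_{i,j}$, scalars $\zeta_{i,j}$, finite index sets $J_i$. (A3) $h,g$ deterministic surjective with $h(x,u)=Ax+Bu+k$ and $g(x,u,\theta,\pi)=G_i(x;u;\theta;\pi)+\chi_i$ whenever $B_i(x;u;\theta;\pi)\le\psi_i$ (finitely many $i$; matrices $A,B,G_i,B_i$; constants $k,\psi_i,\chi_i$), the polytopes $\{B_i(x;u;\theta;\pi)\le\psi_i\}$ having disjoint interiors. (A4) The noises $\{\nu_{t_i}\},\{\omega_{\tau_i}\}$ are i.i.d. sequences of random vectors with i.i.d. components, zero mean and known finite variance, and $\log p_\nu,\log p_\omega$ are expressible using integer linear constraints. (A5) Observability: there exist $T$ and an incentive sequence such that the initial condition $(x_0,\theta_0)$ can be computed exactly from noiseless measurements on $0\le t\le T$. *)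

theory Defs
  imports "HOL-Analysis.Analysis" "HOL-Probability.Probability"
begin

definition vcat :: "real^'a \<Rightarrow> real^'b \<Rightarrow> real^('a + 'b)" where
  "vcat a b = (\<chi> i. case i of Inl j \<Rightarrow> a $ j | Inr j \<Rightarrow> b $ j)"

definition strict_concave_on :: "'a::real_vector set \<Rightarrow> ('a \<Rightarrow> real) \<Rightarrow> bool" where
  "strict_concave_on S f \<longleftrightarrow>
     (\<forall>x\<in>S. \<forall>y\<in>S. \<forall>t::real. x \<noteq> y \<and> 0 < t \<and> t < 1 \<longrightarrow>
        t * f x + (1 - t) * f y < f (t *\<^sub>R x + (1 - t) *\<^sub>R y))"

definition psd :: "real^'n^'n \<Rightarrow> bool" where
  "psd Q \<longleftrightarrow> (\<forall>v. 0 \<le> v \<bullet> (Q *v v))"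

definition milp_representable :: "'v set \<Rightarrow> ('v \<Rightarrow> real) set \<Rightarrow> bool" where
  "milp_representable V S \<longleftrightarrow> finite V \<and>
     (\<exists>(m::nat) (p::nat) (q::nat) (A::nat \<Rightarrow> 'v \<Rightarrow> real) (B::nat \<Rightarrow> nat \<Rightarrow> real)
        (E::nat \<Rightarrow> nat \<Rightarrow> real) (c::nat \<Rightarrow> real).
        S = {v. \<exists>(z::nat \<Rightarrow> real) (w::nat \<Rightarrow> int).
               \<forall>r<m. (\<Sum>k\<in>V. A r k * v k) + (\<Sum>j<p. B r j * z j)
                      + (\<Sum>j<q. E r j * real_of_int (w j)) \<le> c r})"

definition milp_set :: "(real^'n) set \<Rightarrow> bool" where
  "milp_set S \<longleftrightarrow> milp_representable (UNIV :: 'n set) (vec_nth ` S)"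

text \<open>Decision variables of the estimation problem: component i of x_t, u_t, theta_t, pi_t.\<close>
datatype ('nx, 'nu, 'nt, 'np) dvar =
    VX nat 'nx | VU nat 'nu | VT nat 'nt | VP nat 'np

definition traj_feasible ::
  "nat \<Rightarrow> (real^'nx \<Rightarrow> real^'nu \<Rightarrow> real^'nt \<Rightarrow> real^'np \<Rightarrow> real)
   \<Rightarrow> (real^'nx \<Rightarrow> real^'nu \<Rightarrow> real^'nx)
   \<Rightarrow> (real^'nx \<Rightarrow> real^'nu \<Rightarrow> real^'nt \<Rightarrow> real^'np \<Rightarrow> real^'nt)
   \<Rightarrow> (real^'nx) set \<Rightarrow> (real^'nu) set \<Rightarrow> (real^'nt) set \<Rightarrow> (real^'np) set
   \<Rightarrow> (nat \<Rightarrow> real^'nx) \<Rightarrow> (nat \<Rightarrow> real^'nu) \<Rightarrow> (nat \<Rightarrow> real^'nt) \<Rightarrow> (nat \<Rightarrow> real^'np)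
   \<Rightarrow> bool" where
  "traj_feasible N f h g X U Th P xs us ths ps \<longleftrightarrow>
     (\<forall>t\<le>N. xs t \<in> X \<and> ths t \<in> Th) \<and>
     (\<forall>t<N. ps t \<in> P \<and>
        us t \<in> U \<and>
        (\<forall>u\<in>U. f (h (xs t) u) u (ths t) (ps t) \<le> f (h (xs t) (us t)) (us t) (ths t) (ps t)) \<and>
        xs (Suc t) = h (xs t) (us t) \<and>
        ths (Suc t) = g (xs t) (us t) (ths t) (ps t))"

definition feasible_region ::
  "nat \<Rightarrow> (real^'nx \<Rightarrow> real^'nu \<Rightarrow> real^'nt \<Rightarrow> real^'np \<Rightarrow> real)
   \<Rightarrow> (real^'nx \<Rightarrow> real^'nu \<Rightarrow> real^'nx)
   \<Rightarrow> (real^'nx \<Rightarrow> real^'nu \<Rightarrow> real^'nt \<Rightarrow> real^'np \<Rightarrow> real^'nt)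
   \<Rightarrow> (real^'nx) set \<Rightarrow> (real^'nu) set \<Rightarrow> (real^'nt) set \<Rightarrow> (real^'np) set
   \<Rightarrow> (('nx, 'nu, 'nt, 'np) dvar \<Rightarrow> real) set" where
  "feasible_region N f h g X U Th P =
     {v. traj_feasible N f h g X U Th P
           (\<lambda>t. \<chi> i. v (VX t i)) (\<lambda>t. \<chi> i. v (VU t i))
           (\<lambda>t. \<chi> i. v (VT t i)) (\<lambda>t. \<chi> i. v (VP t i))}"

definition region_vars :: "nat \<Rightarrow> ('nx::finite, 'nu::finite, 'nt::finite, 'np::finite) dvar set" where
  "region_vars N =
     {VX t i | t i. t \<le> N} \<union> {VT t i | t i. t \<le> N} \<union>
     {VU t i | t i. t < N} \<union> {VP t i | t i. t < N}"

definition log_hypograph :: "(real^'n \<Rightarrow> real) \<Rightarrow> (real^('n + unit)) set" where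
  "log_hypograph p = {vcat e (\<chi> _. s) | e s. 0 < p e \<and> s \<le> ln (p e)}"

end

theory Submission
  imports Defs
begin

definition affine_expr :: "'v set \<Rightarrow> (('v \<Rightarrow> real) \<Rightarrow> real) \<Rightarrow> bool" where
  "affine_expr V e \<longleftrightarrow> (\<exists>a c. \<forall>v. e v = (\<Sum>k\<in>V. a k * v k) + c)"

lemma affine_expr_var: "finite V \<Longrightarrow> k \<in> V \<Longrightarrow> affine_expr V (\<lambda>v. v k)"
  unfolding affine_expr_def
  by (rule exI[of _ "\<lambda>j. if j = k then 1 else 0"], rule exI[of _ 0])
     (simp add: sum.delta' if_distrib[where f="\<lambda>a. a * _"] cong: if_cong)

lemma affine_expr_const: "affine_expr V (\<lambda>v. c)"
  unfolding affine_expr_def by (rule exI[of _ "\<lambda>_. 0"]) simp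

lemma affine_expr_add:
  assumes "affine_expr V e1" "affine_expr V e2"
  shows "affine_expr V (\<lambda>v. e1 v + e2 v)"
proof -
  obtain a1 c1 a2 c2 where "\<forall>v. e1 v = (\<Sum>k\<in>V. a1 k * v k) + c1" "\<forall>v. e2 v = (\<Sum>k\<in>V. a2 k * v k) + c2"
    using assms unfolding affine_expr_def by blast
  then show ?thesis unfolding affine_expr_def
    by (intro exI[of _ "\<lambda>k. a1 k + a2 k"] exI[of _ "c1 + c2"]) (simp add: distrib_right sum.distrib)
qed

lemma affine_expr_cmult:
  assumes "affine_expr V e"
  shows "affine_expr V (\<lambda>v. a * e v)"
proof -
  obtain b c where "\<forall>v. e v = (\<Sum>k\<in>V. b k * v k) + c"
    using assms unfolding affine_expr_def by blast
  then show ?thesis unfolding affine_expr_def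
    by (intro exI[of _ "\<lambda>k. a * b k"] exI[of _ "a * c"])
       (simp add: distrib_left sum_distrib_left mult.assoc)
qed

lemma affine_expr_mult_const: "affine_expr V e \<Longrightarrow> affine_expr V (\<lambda>v. e v * a)"
  using affine_expr_cmult[of V e a] by (simp add: mult.commute)

lemma affine_expr_minus: "affine_expr V e \<Longrightarrow> affine_expr V (\<lambda>v. - e v)"
  using affine_expr_cmult[of V e "-1"] by simp

lemma affine_expr_diff:
  "affine_expr V e1 \<Longrightarrow> affine_expr V e2 \<Longrightarrow> affine_expr V (\<lambda>v. e1 v - e2 v)"
  using affine_expr_add[of V e1 "\<lambda>v. - e2 v"] affine_expr_minus[of V e2] by simp

lemma affine_expr_sum:
  "finite I \<Longrightarrow> (\<And>i. i \<in> I \<Longrightarrow> affine_expr V (e i)) \<Longrightarrow> affine_expr V (\<lambda>v. \<Sum>i\<in>I. e i v)"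
  by (induction I rule: finite_induct) (simp_all add: affine_expr_const affine_expr_add)

lemma affine_expr_coeffs:
  assumes "\<forall>r\<in>R. affine_expr V (e r)"
  obtains a c where "\<forall>r\<in>R. \<forall>v. e r v = (\<Sum>k\<in>V. a r k * v k) + c r"
proof -
  have "\<forall>r\<in>R. \<exists>ac. \<forall>v. e r v = (\<Sum>k\<in>V. fst ac k * v k) + snd ac"
    using assms unfolding affine_expr_def by auto
  then obtain ac where "\<forall>r\<in>R. \<forall>v. e r v = (\<Sum>k\<in>V. fst (ac r) k * v k) + snd (ac r)"
    by (metis bchoice)
  then show ?thesis by (intro that[of "\<lambda>r. fst (ac r)" "\<lambda>r. snd (ac r)"])
qed

definition affine_vec :: "'v set \<Rightarrow> (('v \<Rightarrow> real) \<Rightarrow> real^'n) \<Rightarrow> bool" where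
  "affine_vec V e \<longleftrightarrow> (\<forall>i. affine_expr V (\<lambda>v. e v $ i))"

lemma affine_vec_var: "finite V \<Longrightarrow> range k \<subseteq> V \<Longrightarrow> affine_vec V (\<lambda>v. \<chi> i. v (k i))"
  unfolding affine_vec_def by (auto intro: affine_expr_var)

lemma affine_vec_const: "affine_vec V (\<lambda>v. c)"
  unfolding affine_vec_def by (simp add: affine_expr_const)

lemma affine_vec_add: "affine_vec V a \<Longrightarrow> affine_vec V b \<Longrightarrow> affine_vec V (\<lambda>v. a v + b v)"
  unfolding affine_vec_def by (simp add: affine_expr_add)

lemma affine_vec_matrix_vector_mult:
  "finite V \<Longrightarrow> affine_vec V e \<Longrightarrow> affine_vec V (\<lambda>v. (M::real^'n::finite^'m) *v e v)"
  unfolding affine_vec_def matrix_vector_mult_def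
  by (auto intro!: affine_expr_sum affine_expr_cmult)

lemma affine_vec_vcat:
  fixes a :: "_ \<Rightarrow> real^'a" and b :: "_ \<Rightarrow> real^'b"
  shows "affine_vec V a \<Longrightarrow> affine_vec V b \<Longrightarrow> affine_vec V (\<lambda>v. vcat (a v) (b v))"
  unfolding affine_vec_def vcat_def
proof (intro allI)
  fix i :: "'a + 'b"
  assume "\<forall>i. affine_expr V (\<lambda>v. a v $ i)" "\<forall>i. affine_expr V (\<lambda>v. b v $ i)"
  then show "affine_expr V (\<lambda>v. (\<chi> i. case i of Inl j \<Rightarrow> a v $ j | Inr j \<Rightarrow> b v $ j) $ i)"
    by (cases i) simp_all
qed

lemma affine_expr_inner_left:
  "finite V \<Longrightarrow> affine_vec V e \<Longrightarrow> affine_expr V (\<lambda>v. (a::real^'n::finite) \<bullet> e v)"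
  unfolding affine_vec_def inner_vec_def
  by (auto intro!: affine_expr_sum affine_expr_cmult)

lemma affine_expr_inner_right:
  "finite V \<Longrightarrow> affine_vec V e \<Longrightarrow> affine_expr V (\<lambda>v. e v \<bullet> (a::real^'n::finite))"
  using affine_expr_inner_left[of V e a] by (simp add: inner_commute)

lemma ex_fun_sum_reindex:
  assumes "bij_betw e {..<n} Z"
  shows "(\<exists>z::'z \<Rightarrow> 'a. \<Phi> (\<lambda>r. \<Sum>j\<in>Z. G r j (z j))) \<longleftrightarrow>
         (\<exists>z::nat \<Rightarrow> 'a. \<Phi> (\<lambda>r. \<Sum>j<n. G r (e j) (z j)))"
proof
  assume "\<exists>z. \<Phi> (\<lambda>r. \<Sum>j\<in>Z. G r j (z j))"
  then obtain z where "\<Phi> (\<lambda>r. \<Sum>j\<in>Z. G r j (z j))" ..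
  moreover have "(\<Sum>j<n. G r (e j) (z (e j))) = (\<Sum>j\<in>Z. G r j (z j))" for r
    using sum.reindex_bij_betw[OF assms, of "\<lambda>j. G r j (z j)"] by (simp add: atLeast0LessThan)
  ultimately show "\<exists>z. \<Phi> (\<lambda>r. \<Sum>j<n. G r (e j) (z j))" by (intro exI[of _ "z \<circ> e"]) simp
next
  assume "\<exists>z. \<Phi> (\<lambda>r. \<Sum>j<n. G r (e j) (z j))"
  then obtain z where "\<Phi> (\<lambda>r. \<Sum>j<n. G r (e j) (z j))" ..
  moreover have "(\<Sum>j\<in>Z. G r j (z (inv_into {..<n} e j))) = (\<Sum>j<n. G r (e j) (z j))" for r
    using sum.reindex_bij_betw[OF assms, of "\<lambda>j. G r j (z (inv_into {..<n} e j))"] assms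
    by (simp add: atLeast0LessThan bij_betw_inv_into_left)
  ultimately show "\<exists>z. \<Phi> (\<lambda>r. \<Sum>j\<in>Z. G r j (z j))"
    by (intro exI[of _ "z \<circ> inv_into {..<n} e"]) simp
qed

lemma milp_representableI:
  fixes R :: "'r set" and Zs :: "'z set" and Ws :: "'q set"
  assumes "finite V" "finite R" "finite Zs" "finite Ws"
  shows "milp_representable V {v. \<exists>(z::'z \<Rightarrow> real) (w::'q \<Rightarrow> int). \<forall>r\<in>R.
           (\<Sum>k\<in>V. A r k * v k) + (\<Sum>j\<in>Zs. B r j * z j) + (\<Sum>j\<in>Ws. E r j * of_int (w j)) \<le> c r}"
proof -
  obtain eR where eR: "bij_betw eR {..<card R} R"
    using ex_bij_betw_nat_finite[OF assms(2)] by (auto simp: atLeast0LessThan)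
  obtain eZ where eZ: "bij_betw eZ {..<card Zs} Zs"
    using ex_bij_betw_nat_finite[OF assms(3)] by (auto simp: atLeast0LessThan)
  obtain eW where eW: "bij_betw eW {..<card Ws} Ws"
    using ex_bij_betw_nat_finite[OF assms(4)] by (auto simp: atLeast0LessThan)
  have rows: "(\<forall>r\<in>R. P r) \<longleftrightarrow> (\<forall>i<card R. P (eR i))" for P
  proof -
    have "(\<forall>r\<in>R. P r) \<longleftrightarrow> (\<forall>r\<in>eR ` {..<card R}. P r)"
      by (simp only: bij_betw_imp_surj_on[OF eR])
    then show ?thesis by (simp add: lessThan_def)
  qed
  define \<Phi> where "\<Phi> v sz sw \<longleftrightarrow> (\<forall>i<card R. (\<Sum>k\<in>V. A (eR i) k * v k) + sz (eR i) + sw (eR i) \<le> c (eR i))"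
    for v and sz sw :: "'r \<Rightarrow> real"
  have Zs_reindex: "(\<exists>(z::'z \<Rightarrow> real) w. \<Phi> v (\<lambda>r. \<Sum>j\<in>Zs. B r j * z j) (sw w))
      \<longleftrightarrow> (\<exists>(z::nat \<Rightarrow> real) w. \<Phi> v (\<lambda>r. \<Sum>j<card Zs. B r (eZ j) * z j) (sw w))" for v sw
    by (rule ex_fun_sum_reindex[OF eZ, where G="\<lambda>r j x. B r j * x"])
  have Ws_reindex: "(\<exists>w::'q \<Rightarrow> int. \<Phi> v sz (\<lambda>r. \<Sum>j\<in>Ws. E r j * of_int (w j)))
      \<longleftrightarrow> (\<exists>w::nat \<Rightarrow> int. \<Phi> v sz (\<lambda>r. \<Sum>j<card Ws. E r (eW j) * of_int (w j)))" for v sz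
    by (rule ex_fun_sum_reindex[OF eW, where G="\<lambda>r j x. E r j * of_int x"])
  have "(\<exists>(z::'z \<Rightarrow> real) (w::'q \<Rightarrow> int). \<forall>r\<in>R.
           (\<Sum>k\<in>V. A r k * v k) + (\<Sum>j\<in>Zs. B r j * z j) + (\<Sum>j\<in>Ws. E r j * of_int (w j)) \<le> c r)
    \<longleftrightarrow> (\<exists>(z::nat \<Rightarrow> real) (w::nat \<Rightarrow> int). \<forall>i<card R. (\<Sum>k\<in>V. A (eR i) k * v k)
           + (\<Sum>j<card Zs. B (eR i) (eZ j) * z j) + (\<Sum>j<card Ws. E (eR i) (eW j) * of_int (w j)) \<le> c (eR i))"
    (is "?lhs v \<longleftrightarrow> ?rhs v") for v
  proof -
    have "?lhs v \<longleftrightarrow> (\<exists>z w. \<Phi> v (\<lambda>r. \<Sum>j\<in>Zs. B r j * z j) (\<lambda>r. \<Sum>j\<in>Ws. E r j * of_int (w j)))"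
      unfolding rows \<Phi>_def ..
    also have "\<dots> \<longleftrightarrow> (\<exists>z w. \<Phi> v (\<lambda>r. \<Sum>j<card Zs. B r (eZ j) * z j) (\<lambda>r. \<Sum>j\<in>Ws. E r j * of_int (w j)))"
      by (rule Zs_reindex)
    also have "\<dots> \<longleftrightarrow> ?rhs v"
      unfolding Ws_reindex by (simp add: \<Phi>_def)
    finally show ?thesis .
  qed
  then show ?thesis
    unfolding milp_representable_def using assms(1)
    by (intro conjI exI[of _ "card R"] exI[of _ "card Zs"] exI[of _ "card Ws"]
          exI[of _ "\<lambda>i. A (eR i)"] exI[of _ "\<lambda>i j. B (eR i) (eZ j)"] exI[of _ "\<lambda>i j. E (eR i) (eW j)"]
          exI[of _ "\<lambda>i. c (eR i)"]) auto
qed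

lemma ball_Plus_iff: "(\<forall>r\<in>X <+> Y. P r) \<longleftrightarrow> (\<forall>r\<in>X. P (Inl r)) \<and> (\<forall>r\<in>Y. P (Inr r))"
  by auto

lemma ex_fun_Plus_iff: "((\<exists>z1. P z1) \<and> (\<exists>z2. Q z2)) \<longleftrightarrow> (\<exists>z. P (z \<circ> Inl) \<and> Q (z \<circ> Inr))"
proof
  assume "(\<exists>z1. P z1) \<and> (\<exists>z2. Q z2)"
  then obtain z1 z2 where "P z1" "Q z2" by blast
  then show "\<exists>z. P (z \<circ> Inl) \<and> Q (z \<circ> Inr)" by (intro exI[of _ "case_sum z1 z2"]) (simp add: comp_def)
qed blast

lemma milp_representableE:
  assumes "milp_representable V S"
  obtains m A B p E q c where "finite V"
    "S = {v. \<exists>(z::nat \<Rightarrow> real) (w::nat \<Rightarrow> int). \<forall>r<(m::nat). (\<Sum>k\<in>V. A r k * v k) + (\<Sum>j<p. B r j * z j)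
        + (\<Sum>j<q. E r j * of_int (w j)) \<le> c r}"
  using assms unfolding milp_representable_def by (elim conjE exE) (rule that; assumption)

lemma milp_representable_Int:
  assumes "milp_representable V S" "milp_representable V T"
  shows "milp_representable V (S \<inter> T)"
proof -
  obtain m1 p1 q1 A1 B1 E1 c1 where fin: "finite V" and S:
    "S = {v. \<exists>(z::nat \<Rightarrow> real) (w::nat \<Rightarrow> int). \<forall>r<(m1::nat). (\<Sum>k\<in>V. A1 r k * v k) + (\<Sum>j<p1. B1 r j * z j)
        + (\<Sum>j<q1. E1 r j * of_int (w j)) \<le> c1 r}"
    using assms(1) by (elim milp_representableE) blast
  obtain m2 p2 q2 A2 B2 E2 c2 where T:
    "T = {v. \<exists>(z::nat \<Rightarrow> real) (w::nat \<Rightarrow> int). \<forall>r<(m2::nat). (\<Sum>k\<in>V. A2 r k * v k) + (\<Sum>j<p2. B2 r j * z j)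
        + (\<Sum>j<q2. E2 r j * of_int (w j)) \<le> c2 r}"
    using assms(2) by (elim milp_representableE) blast
  define A where "A = case_sum A1 A2"
  define B where "B r j = (case (r, j) of (Inl r, Inl j) \<Rightarrow> B1 r j | (Inr r, Inr j) \<Rightarrow> B2 r j | _ \<Rightarrow> 0)"
    for r j
  define E where "E r j = (case (r, j) of (Inl r, Inl j) \<Rightarrow> E1 r j | (Inr r, Inr j) \<Rightarrow> E2 r j | _ \<Rightarrow> 0)"
    for r j
  define P1 where "P1 v z w \<longleftrightarrow> (\<forall>r<m1. (\<Sum>k\<in>V. A1 r k * v k) + (\<Sum>j<p1. B1 r j * z j)
        + (\<Sum>j<q1. E1 r j * of_int (w j)) \<le> c1 r)" for v z and w :: "nat \<Rightarrow> int"
  define P2 where "P2 v z w \<longleftrightarrow> (\<forall>r<m2. (\<Sum>k\<in>V. A2 r k * v k) + (\<Sum>j<p2. B2 r j * z j)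
        + (\<Sum>j<q2. E2 r j * of_int (w j)) \<le> c2 r)" for v z and w :: "nat \<Rightarrow> int"
  have rows_iff: "(\<forall>r\<in>{..<m1} <+> {..<m2}. (\<Sum>k\<in>V. A r k * v k) + (\<Sum>j\<in>{..<p1} <+> {..<p2}. B r j * z j)
      + (\<Sum>j\<in>{..<q1} <+> {..<q2}. E r j * of_int (w j)) \<le> case_sum c1 c2 r)
    \<longleftrightarrow> P1 v (z \<circ> Inl) (w \<circ> Inl) \<and> P2 v (z \<circ> Inr) (w \<circ> Inr)" for v z w
    by (simp add: P1_def P2_def sum.Plus A_def B_def E_def ball_Plus_iff) (simp add: Ball_def)
  have mem_iff: "v \<in> S \<inter> T \<longleftrightarrow> (\<exists>z w. P1 v (z \<circ> Inl) (w \<circ> Inl) \<and> P2 v (z \<circ> Inr) (w \<circ> Inr))" for v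
  proof -
    have "v \<in> S \<inter> T \<longleftrightarrow> (\<exists>z1. \<exists>w1. P1 v z1 w1) \<and> (\<exists>z2. \<exists>w2. P2 v z2 w2)"
      unfolding S T P1_def P2_def by blast
    also have "\<dots> \<longleftrightarrow> (\<exists>z. (\<exists>w1. P1 v (z \<circ> Inl) w1) \<and> (\<exists>w2. P2 v (z \<circ> Inr) w2))"
      by (rule ex_fun_Plus_iff)
    also have "\<dots> \<longleftrightarrow> (\<exists>z w. P1 v (z \<circ> Inl) (w \<circ> Inl) \<and> P2 v (z \<circ> Inr) (w \<circ> Inr))"
      by (simp only: ex_fun_Plus_iff)
    finally show ?thesis .
  qed
  have "S \<inter> T = {v. \<exists>(z::nat + nat \<Rightarrow> real) (w::nat + nat \<Rightarrow> int). \<forall>r\<in>{..<m1} <+> {..<m2}.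
      (\<Sum>k\<in>V. A r k * v k) + (\<Sum>j\<in>{..<p1} <+> {..<p2}. B r j * z j)
      + (\<Sum>j\<in>{..<q1} <+> {..<q2}. E r j * of_int (w j)) \<le> case_sum c1 c2 r}"
    unfolding rows_iff using mem_iff by blast
  then show ?thesis
    by (simp add: milp_representableI fin)
qed

lemma milp_representable_UNIV: "finite V \<Longrightarrow> milp_representable V UNIV"
  unfolding milp_representable_def by (intro conjI exI[of _ 0]) auto

lemma milp_representable_INT:
  assumes "finite V" "finite I" "\<And>i. i \<in> I \<Longrightarrow> milp_representable V (S i)"
  shows "milp_representable V (\<Inter>i\<in>I. S i)"
  using assms(2,3)
  by (induction I rule: finite_induct)
     (simp_all add: milp_representable_UNIV[OF assms(1)] milp_representable_Int)

lemma milp_representable_mono_vars: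
  assumes "milp_representable V' S" "V' \<subseteq> V" "finite V"
  shows "milp_representable V S"
proof -
  obtain m A B p E q c where
    S: "S = {v. \<exists>(z::nat \<Rightarrow> real) (w::nat \<Rightarrow> int). \<forall>r<(m::nat). (\<Sum>k\<in>V'. A r k * v k)
        + (\<Sum>j<p. B r j * z j) + (\<Sum>j<q. E r j * of_int (w j)) \<le> c r}"
    using assms(1) by (elim milp_representableE) blast
  have "(\<Sum>k\<in>V. (if k \<in> V' then A r k else 0) * v k) = (\<Sum>k\<in>V'. A r k * v k)" for r v
    using assms(2,3) by (simp add: if_distrib[where f="\<lambda>a. a * _"] sum.If_cases Int_absorb1 cong: if_cong)
  then show ?thesis
    unfolding milp_representable_def S using assms(3)
    by (intro conjI exI[of _ m] exI[of _ p] exI[of _ q] exI[of _ "\<lambda>r k. if k \<in> V' then A r k else 0"]) auto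
qed

definition affine_expr2 :: "'v set \<Rightarrow> 'z set \<Rightarrow> (('v \<Rightarrow> real) \<Rightarrow> ('z \<Rightarrow> real) \<Rightarrow> real) \<Rightarrow> bool" where
  "affine_expr2 V Z f \<longleftrightarrow> (\<exists>e d. affine_expr V e \<and> affine_expr Z d \<and> (\<forall>v z. f v z = e v + d z))"

lemma affine_expr2_left: "affine_expr V e \<Longrightarrow> affine_expr2 V Z (\<lambda>v z. e v)"
  unfolding affine_expr2_def by (intro exI[of _ e] exI[of _ "\<lambda>_. 0"]) (simp add: affine_expr_const)

lemma affine_expr2_right: "affine_expr Z d \<Longrightarrow> affine_expr2 V Z (\<lambda>v z. d z)"
  unfolding affine_expr2_def by (intro exI[of _ "\<lambda>_. 0"] exI[of _ d]) (simp add: affine_expr_const)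

lemma affine_expr2_add:
  assumes "affine_expr2 V Z f" "affine_expr2 V Z g"
  shows "affine_expr2 V Z (\<lambda>v z. f v z + g v z)"
proof -
  obtain e1 d1 e2 d2 where "affine_expr V e1" "affine_expr Z d1" "\<forall>v z. f v z = e1 v + d1 z"
    "affine_expr V e2" "affine_expr Z d2" "\<forall>v z. g v z = e2 v + d2 z"
    using assms unfolding affine_expr2_def by blast
  then show ?thesis unfolding affine_expr2_def
    by (intro exI[of _ "\<lambda>v. e1 v + e2 v"] exI[of _ "\<lambda>z. d1 z + d2 z"]) (simp add: affine_expr_add)
qed

text \<open>Polyhedra in the modelled variables \<open>v\<close> (indexed by \<open>V\<close>) and auxiliary variables \<open>z\<close>
  (indexed by \<open>Z\<close>); projecting out \<open>z\<close> yields a mixed integer linear representation.\<close>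

definition affine_system :: "'v set \<Rightarrow> 'z set \<Rightarrow> (('v \<Rightarrow> real) \<times> ('z \<Rightarrow> real)) set \<Rightarrow> bool" where
  "affine_system V Z T \<longleftrightarrow> (\<exists>(m::nat) e d. (\<forall>r<m. affine_expr V (e r) \<and> affine_expr Z (d r)) \<and>
     T = {(v, z). \<forall>r<m. e r v + d r z \<le> 0})"

lemma all_less_add_iff: "(\<forall>r < m1 + (m2::nat). P r) \<longleftrightarrow> (\<forall>r<m1. P r) \<and> (\<forall>r<m2. P (m1 + r))"
  by (metis add_diff_inverse_nat nat_add_left_cancel_less trans_less_add1)

lemma affine_system_Int:
  assumes "affine_system V Z T1" "affine_system V Z T2"
  shows "affine_system V Z (T1 \<inter> T2)"
proof -
  obtain m1 e1 d1 where h1: "\<forall>r<(m1::nat). affine_expr V (e1 r) \<and> affine_expr Z (d1 r)"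
    and T1: "T1 = {(v, z). \<forall>r<m1. e1 r v + d1 r z \<le> 0}"
    using assms(1) unfolding affine_system_def by blast
  obtain m2 e2 d2 where h2: "\<forall>r<(m2::nat). affine_expr V (e2 r) \<and> affine_expr Z (d2 r)"
    and T2: "T2 = {(v, z). \<forall>r<m2. e2 r v + d2 r z \<le> 0}"
    using assms(2) unfolding affine_system_def by blast
  define e where "e r = (if r < m1 then e1 r else e2 (r - m1))" for r
  define d where "d r = (if r < m1 then d1 r else d2 (r - m1))" for r
  have "\<forall>r<m1 + m2. affine_expr V (e r) \<and> affine_expr Z (d r)"
    unfolding all_less_add_iff using h1 h2 by (simp add: e_def d_def)
  moreover have "T1 \<inter> T2 = {(v, z). \<forall>r<m1 + m2. e r v + d r z \<le> 0}"
    unfolding all_less_add_iff T1 T2 by (auto simp: e_def d_def)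
  ultimately show ?thesis unfolding affine_system_def by blast
qed

lemma affine_system_UNIV: "affine_system V Z UNIV"
  unfolding affine_system_def by (rule exI[of _ 0]) auto

lemma affine_system_ball:
  assumes "finite I" "\<And>i. i \<in> I \<Longrightarrow> affine_system V Z {(v, z). P i v z}"
  shows "affine_system V Z {(v, z). \<forall>i\<in>I. P i v z}"
  using assms
proof (induction I rule: finite_induct)
  case empty
  then show ?case using affine_system_UNIV by (simp add: case_prod_unfold)
next
  case (insert i I)
  have "{(v, z). \<forall>j\<in>insert i I. P j v z} = {(v, z). P i v z} \<inter> {(v, z). \<forall>j\<in>I. P j v z}" by auto
  then show ?case using insert by (simp add: affine_system_Int)
qed

lemma affine_system_conj:
  "affine_system V Z {(v, z). P v z} \<Longrightarrow> affine_system V Z {(v, z). Q v z} \<Longrightarrow>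
   affine_system V Z {(v, z). P v z \<and> Q v z}"
  using affine_system_Int[of V Z "{(v, z). P v z}" "{(v, z). Q v z}"] by (simp add: Int_def case_prod_unfold)

lemma affine_system_all:
  "(\<And>i::'a::finite. affine_system V Z {(v, z). P i v z}) \<Longrightarrow> affine_system V Z {(v, z). \<forall>i. P i v z}"
  using affine_system_ball[of "UNIV :: 'a set" V Z P] by simp

lemma affine_system_le:
  assumes "affine_expr2 V Z f" "affine_expr2 V Z g"
  shows "affine_system V Z {(v, z). f v z \<le> g v z}"
proof -
  obtain e1 d1 e2 d2 where "affine_expr V e1" "affine_expr Z d1" "\<forall>v z. f v z = e1 v + d1 z"
    "affine_expr V e2" "affine_expr Z d2" "\<forall>v z. g v z = e2 v + d2 z"
    using assms unfolding affine_expr2_def by blast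
  then show ?thesis unfolding affine_system_def
    by (intro exI[of _ 1] exI[of _ "\<lambda>_ v. e1 v - e2 v"] exI[of _ "\<lambda>_ z. d1 z - d2 z"])
       (auto simp: affine_expr_diff)
qed

lemma affine_system_eq:
  assumes "affine_expr2 V Z f" "affine_expr2 V Z g"
  shows "affine_system V Z {(v, z). f v z = g v z}"
proof -
  have "{(v, z). f v z = g v z} = {(v, z). f v z \<le> g v z \<and> g v z \<le> f v z}" by auto
  then show ?thesis by (simp add: affine_system_conj affine_system_le assms)
qed

definition ineq_system ::
  "'v set \<Rightarrow> 'z set \<Rightarrow> nat \<Rightarrow> (nat \<Rightarrow> 'v \<Rightarrow> real) \<Rightarrow> (nat \<Rightarrow> 'z \<Rightarrow> real) \<Rightarrow> (nat \<Rightarrow> real)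
    \<Rightarrow> (('v \<Rightarrow> real) \<times> ('z \<Rightarrow> real)) set" where
  "ineq_system V Z m A D c = {(v, z). \<forall>r<m. (\<Sum>k\<in>V. A r k * v k) + (\<Sum>j\<in>Z. D r j * z j) + c r \<le> 0}"

lemma affine_systemE:
  assumes "affine_system V Z T"
  obtains m A D c where "T = ineq_system V Z m A D c"
proof -
  obtain m e d where h: "\<forall>r<(m::nat). affine_expr V (e r) \<and> affine_expr Z (d r)"
    and T: "T = {(v, z). \<forall>r<m. e r v + d r z \<le> 0}"
    using assms unfolding affine_system_def by blast
  obtain A ca where A: "\<forall>r\<in>{..<m}. \<forall>v. e r v = (\<Sum>k\<in>V. A r k * v k) + ca r"
    using affine_expr_coeffs[of "{..<m}" V e] h by auto
  obtain D cd where D: "\<forall>r\<in>{..<m}. \<forall>z. d r z = (\<Sum>j\<in>Z. D r j * z j) + cd r"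
    using affine_expr_coeffs[of "{..<m}" Z d] h by auto
  have "T = ineq_system V Z m A D (\<lambda>r. ca r + cd r)"
    unfolding ineq_system_def T using A D by (auto simp: algebra_simps)
  then show ?thesis by (rule that)
qed

lemma milp_representable_projection:
  fixes Z :: "'z set"
  assumes "finite V" "finite Z" "W \<subseteq> Z" "affine_system V Z T"
  shows "milp_representable V {v. \<exists>z. (v, z) \<in> T \<and> (\<forall>j\<in>W. z j \<in> \<int>)}"
proof -
  obtain m A D c where T: "T = ineq_system V Z m A D c"
    using assms(4) by (rule affine_systemE)
  have split: "(\<Sum>j\<in>Z. D r j * (if j \<in> W then of_int (w j) else z j))
      = (\<Sum>j\<in>Z - W. D r j * z j) + (\<Sum>j\<in>W. D r j * of_int (w j))" for r z w
  proof -
    have "(\<Sum>j\<in>Z - W. D r j * (if j \<in> W then of_int (w j) else z j)) = (\<Sum>j\<in>Z - W. D r j * z j)"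
      "(\<Sum>j\<in>W. D r j * (if j \<in> W then of_int (w j) else z j)) = (\<Sum>j\<in>W. D r j * of_int (w j))"
      by (auto intro: sum.cong)
    then show ?thesis using sum.subset_diff[OF assms(3,2)] by metis
  qed
  have mem: "(v, \<lambda>j. if j \<in> W then of_int (w j) else z j) \<in> T \<longleftrightarrow> (\<forall>r\<in>{..<m}.
      (\<Sum>k\<in>V. A r k * v k) + (\<Sum>j\<in>Z - W. D r j * z j) + (\<Sum>j\<in>W. D r j * of_int (w j)) \<le> - c r)"
    for v z w
  proof -
    have "(v, \<lambda>j. if j \<in> W then of_int (w j) else z j) \<in> T \<longleftrightarrow> (\<forall>r<m.
        (\<Sum>k\<in>V. A r k * v k) + ((\<Sum>j\<in>Z - W. D r j * z j) + (\<Sum>j\<in>W. D r j * of_int (w j))) + c r \<le> 0)"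
      unfolding T ineq_system_def by (simp add: split)
    then show ?thesis by (smt (verit) lessThan_iff)
  qed
  have "(\<exists>z. (v, z) \<in> T \<and> (\<forall>j\<in>W. z j \<in> \<int>)) \<longleftrightarrow> (\<exists>z (w::'z \<Rightarrow> int). \<forall>r\<in>{..<m}.
      (\<Sum>k\<in>V. A r k * v k) + (\<Sum>j\<in>Z - W. D r j * z j) + (\<Sum>j\<in>W. D r j * of_int (w j)) \<le> - c r)" for v
  proof
    assume "\<exists>z. (v, z) \<in> T \<and> (\<forall>j\<in>W. z j \<in> \<int>)"
    then obtain z where z: "(v, z) \<in> T" "\<forall>j\<in>W. z j \<in> \<int>" by blast
    then have "\<forall>j\<in>W. \<exists>n. z j = of_int n" by (metis Ints_cases)
    then obtain w where "\<forall>j\<in>W. z j = of_int (w j)" by (metis bchoice)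
    then have "z = (\<lambda>j. if j \<in> W then of_int (w j) else z j)" by auto
    then have "(v, \<lambda>j. if j \<in> W then of_int (w j) else z j) \<in> T" using z(1) by simp
    then show "\<exists>z w. \<forall>r\<in>{..<m}. (\<Sum>k\<in>V. A r k * v k) + (\<Sum>j\<in>Z - W. D r j * z j)
        + (\<Sum>j\<in>W. D r j * of_int (w j)) \<le> - c r"
      unfolding mem by blast
  next
    assume "\<exists>z (w::'z \<Rightarrow> int). \<forall>r\<in>{..<m}. (\<Sum>k\<in>V. A r k * v k) + (\<Sum>j\<in>Z - W. D r j * z j)
        + (\<Sum>j\<in>W. D r j * of_int (w j)) \<le> - c r"
    then obtain z w where "(v, \<lambda>j. if j \<in> W then of_int (w j) else z j) \<in> T" using mem by blast
    then show "\<exists>z. (v, z) \<in> T \<and> (\<forall>j\<in>W. z j \<in> \<int>)"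
      by (intro exI[of _ "\<lambda>j. if j \<in> W then of_int (w j) else z j"]) simp
  qed
  then show ?thesis
    using milp_representableI[OF assms(1) finite_lessThan finite_Diff[OF assms(2)]
        finite_subset[OF assms(3,2)], where A=A and B=D and E=D and c="\<lambda>r. - c r"]
    by simp
qed

text \<open>A polyhedron whose \<open>v\<close>-part is bounded has no recession direction moving \<open>v\<close>.\<close>

lemma ineq_system_recession_zero:
  assumes "(v0, z0) \<in> ineq_system V Z m A D c"
    and bounded: "\<forall>(v, z)\<in>ineq_system V Z m A D c. \<forall>k\<in>V. \<bar>v k\<bar> \<le> M"
    and "(y, u) \<in> ineq_system V Z m A D (\<lambda>_. 0)" and "k \<in> V"
  shows "y k = 0"
proof (rule ccontr)
  assume "y k \<noteq> 0"
  have ray: "(\<lambda>k. v0 k + t * y k, \<lambda>j. z0 j + t * u j) \<in> ineq_system V Z m A D c" if "t \<ge> 0" for t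
  proof -
    have "(\<Sum>k\<in>V. A r k * (v0 k + t * y k)) + (\<Sum>j\<in>Z. D r j * (z0 j + t * u j)) + c r \<le> 0"
      if "r < m" for r
    proof -
      have "(\<Sum>k\<in>V. A r k * (v0 k + t * y k)) + (\<Sum>j\<in>Z. D r j * (z0 j + t * u j)) + c r
          = ((\<Sum>k\<in>V. A r k * v0 k) + (\<Sum>j\<in>Z. D r j * z0 j) + c r)
            + t * ((\<Sum>k\<in>V. A r k * y k) + (\<Sum>j\<in>Z. D r j * u j))"
        by (simp add: algebra_simps sum.distrib sum_distrib_left)
      moreover have "t * ((\<Sum>k\<in>V. A r k * y k) + (\<Sum>j\<in>Z. D r j * u j)) \<le> 0"
        using assms(3) that \<open>t \<ge> 0\<close> by (simp add: ineq_system_def mult_nonneg_nonpos)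
      moreover have "(\<Sum>k\<in>V. A r k * v0 k) + (\<Sum>j\<in>Z. D r j * z0 j) + c r \<le> 0"
        using assms(1) that by (simp add: ineq_system_def)
      ultimately show ?thesis by linarith
    qed
    then show ?thesis by (simp add: ineq_system_def)
  qed
  define t where "t = (M + \<bar>v0 k\<bar> + 1) / \<bar>y k\<bar>"
  have "M \<ge> 0" using bounded assms(1,4) by force
  then have "t \<ge> 0" by (simp add: t_def)
  then have "\<bar>v0 k + t * y k\<bar> \<le> M" using bounded ray assms(4) by fastforce
  moreover have "t * \<bar>y k\<bar> = M + \<bar>v0 k\<bar> + 1" using \<open>y k \<noteq> 0\<close> by (simp add: t_def)
  moreover have "\<bar>t * y k\<bar> = t * \<bar>y k\<bar>" using \<open>t \<ge> 0\<close> by (simp add: abs_mult)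
  ultimately show False by linarith
qed

lemma indicator_sum_eq_1:
  fixes x :: "'i \<Rightarrow> real"
  assumes "finite I" "\<forall>i\<in>I. x i = 0 \<or> x i = 1" "(\<Sum>i\<in>I. x i) = 1"
  obtains i0 where "i0 \<in> I" "x i0 = 1" "\<forall>i\<in>I - {i0}. x i = 0"
proof -
  have "(\<Sum>i\<in>I. x i) = (\<Sum>i\<in>I. if x i = 1 then 1 else 0)"
    using assms(2) by (intro sum.cong) auto
  also have "\<dots> = real (card {i\<in>I. x i = 1})"
    using assms(1) by (simp add: sum.If_cases Int_def conj_commute)
  finally obtain i0 where "{i\<in>I. x i = 1} = {i0}"
    using assms(3) card_1_singletonE by auto
  then show ?thesis using assms(2) by (intro that) auto
qed

lemma Ints_unit_interval: "x \<in> \<int> \<Longrightarrow> 0 \<le> x \<Longrightarrow> x \<le> (1::real) \<Longrightarrow> x = 0 \<or> x = 1"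
  by (elim Ints_cases) auto

text \<open>Balas' disaggregated formulation: every disjunct gets its own copy of all variables,
  scaled by a 0/1 indicator; boundedness makes the copies of the inactive disjuncts vanish.\<close>

lemma milp_representable_UN_ineq_system:
  fixes m :: "'i \<Rightarrow> nat" and A :: "'i \<Rightarrow> nat \<Rightarrow> 'v \<Rightarrow> real" and D :: "'i \<Rightarrow> nat \<Rightarrow> 'z \<Rightarrow> real"
    and c :: "'i \<Rightarrow> nat \<Rightarrow> real"
  assumes fin: "finite V" "finite Z" "finite I"
    and nonempty: "\<And>i. i \<in> I \<Longrightarrow> ineq_system V Z (m i) (A i) (D i) (c i) \<noteq> {}"
    and bounded: "\<And>i. i \<in> I \<Longrightarrow> \<forall>(v, z)\<in>ineq_system V Z (m i) (A i) (D i) (c i). \<forall>k\<in>V. \<bar>v k\<bar> \<le> M i"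
  shows "milp_representable V (\<Union>i\<in>I. {v. \<exists>z. (v, z) \<in> ineq_system V Z (m i) (A i) (D i) (c i)})"
proof -
  let ?Y = "((I \<times> V) <+> (I \<times> Z)) <+> I"
  define copy where "copy y i = (\<lambda>k. y (Inl (Inl (i, k))), \<lambda>j. y (Inl (Inr (i, j))))"
    for y :: "(('i \<times> 'v) + ('i \<times> 'z)) + 'i \<Rightarrow> real" and i
  define B where "B = {(v, y). (\<forall>k\<in>V. v k = (\<Sum>i\<in>I. y (Inl (Inl (i, k)))))
      \<and> (\<forall>i\<in>I. \<forall>r\<in>{..<m i}. (\<Sum>k\<in>V. A i r k * y (Inl (Inl (i, k))))
            + (\<Sum>j\<in>Z. D i r j * y (Inl (Inr (i, j)))) + c i r * y (Inr i) \<le> 0)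
      \<and> (\<forall>i\<in>I. 0 \<le> y (Inr i) \<and> y (Inr i) \<le> 1) \<and> (\<Sum>i\<in>I. y (Inr i)) = 1}"
  have copy_mem: "copy y i \<in> ineq_system V Z (m i) (A i) (D i) (\<lambda>r. c i r * y (Inr i))"
    if "(v, y) \<in> B" "i \<in> I" for v y i
    using that unfolding B_def copy_def ineq_system_def by auto
  have "affine_system V ?Y B"
    unfolding B_def using fin
    by (intro affine_system_conj affine_system_ball affine_system_le affine_system_eq affine_expr2_add
          affine_expr2_left affine_expr2_right affine_expr_sum affine_expr_cmult affine_expr_var
          affine_expr_const finite_lessThan) auto
  then have "milp_representable V {v. \<exists>y. (v, y) \<in> B \<and> (\<forall>j\<in>Inr ` I. y j \<in> \<int>)}"
    using fin by (intro milp_representable_projection) auto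
  moreover have "{v. \<exists>y. (v, y) \<in> B \<and> (\<forall>j\<in>Inr ` I. y j \<in> \<int>)}
      = (\<Union>i\<in>I. {v. \<exists>z. (v, z) \<in> ineq_system V Z (m i) (A i) (D i) (c i)})"
  proof (intro set_eqI iffI)
    fix v assume "v \<in> (\<Union>i\<in>I. {v. \<exists>z. (v, z) \<in> ineq_system V Z (m i) (A i) (D i) (c i)})"
    then obtain i0 z where i0: "i0 \<in> I" "(v, z) \<in> ineq_system V Z (m i0) (A i0) (D i0) (c i0)" by blast
    define y where "y x = (case x of Inl (Inl (i, k)) \<Rightarrow> if i = i0 then v k else 0
        | Inl (Inr (i, j)) \<Rightarrow> if i = i0 then z j else 0 | Inr i \<Rightarrow> if i = i0 then 1 else 0)" for x
    have "(v, y) \<in> B" using i0 fin unfolding B_def ineq_system_def y_def by (simp add: if_distrib cong: if_cong)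
    then show "v \<in> {v. \<exists>y. (v, y) \<in> B \<and> (\<forall>j\<in>Inr ` I. y j \<in> \<int>)}" by (auto simp: y_def)
  next
    fix v assume "v \<in> {v. \<exists>y. (v, y) \<in> B \<and> (\<forall>j\<in>Inr ` I. y j \<in> \<int>)}"
    then obtain y where y: "(v, y) \<in> B" "\<forall>i\<in>I. y (Inr i) \<in> \<int>" by blast
    then have "\<forall>i\<in>I. y (Inr i) = 0 \<or> y (Inr i) = 1" "(\<Sum>i\<in>I. y (Inr i)) = 1"
      using Ints_unit_interval unfolding B_def by auto
    then obtain i0 where i0: "i0 \<in> I" "y (Inr i0) = 1" "\<forall>i\<in>I - {i0}. y (Inr i) = 0"
      using indicator_sum_eq_1[OF fin(3)] by metis
    have inactive: "y (Inl (Inl (i, k))) = 0" if i: "i \<in> I - {i0}" and k: "k \<in> V" for i k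
    proof -
      obtain p where "p \<in> ineq_system V Z (m i) (A i) (D i) (c i)"
        using nonempty[of i] i by blast
      moreover have "copy y i \<in> ineq_system V Z (m i) (A i) (D i) (\<lambda>_. 0)"
        using copy_mem[OF y(1), of i] i0(3) i by simp
      ultimately show ?thesis
        using ineq_system_recession_zero[OF _ bounded _ k] i
        by (metis DiffD1 copy_def prod.collapse)
    qed
    have "v k = y (Inl (Inl (i0, k)))" if "k \<in> V" for k
      using y(1) that inactive i0(1) fin(3) unfolding B_def by (simp add: sum.remove)
    then have "(v, snd (copy y i0)) \<in> ineq_system V Z (m i0) (A i0) (D i0) (c i0)"
      using copy_mem[OF y(1) i0(1)] i0(2) unfolding ineq_system_def copy_def by (simp cong: sum.cong)
    then show "v \<in> (\<Union>i\<in>I. {v. \<exists>z. (v, z) \<in> ineq_system V Z (m i) (A i) (D i) (c i)})"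
      using i0(1) by blast
  qed
  ultimately show ?thesis by simp
qed

lemma milp_representable_UN_affine_system:
  assumes "finite V" "finite Z" "finite I"
    and "\<And>i. i \<in> I \<Longrightarrow> affine_system V Z (T i)"
    and "\<And>i. i \<in> I \<Longrightarrow> \<exists>M. \<forall>(v, z)\<in>T i. \<forall>k\<in>V. \<bar>v k\<bar> \<le> M"
  shows "milp_representable V (\<Union>i\<in>I. {v. \<exists>z. (v, z) \<in> T i})"
proof -
  define I' where "I' = {i\<in>I. T i \<noteq> {}}"
  have "\<forall>i\<in>I'. \<exists>q. T i = ineq_system V Z (fst q) (fst (snd q)) (fst (snd (snd q))) (snd (snd (snd q)))"
  proof
    fix i assume "i \<in> I'"
    then have "affine_system V Z (T i)" using assms(4) by (simp add: I'_def)
    then obtain m A D c where "T i = ineq_system V Z m A D c" by (rule affine_systemE)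
    then show "\<exists>q. T i = ineq_system V Z (fst q) (fst (snd q)) (fst (snd (snd q))) (snd (snd (snd q)))"
      by (intro exI[of _ "(m, A, D, c)"]) simp
  qed
  from bchoice[OF this] obtain q where q: "\<forall>i\<in>I'. T i = ineq_system V Z (fst (q i)) (fst (snd (q i)))
      (fst (snd (snd (q i)))) (snd (snd (snd (q i))))"
    by blast
  define m A D c where "m i = fst (q i)" and "A i = fst (snd (q i))" and "D i = fst (snd (snd (q i)))"
    and "c i = snd (snd (snd (q i)))" for i
  have T: "T i = ineq_system V Z (m i) (A i) (D i) (c i)" if "i \<in> I'" for i
    using q that by (simp add: m_def A_def D_def c_def)
  obtain M where M: "\<forall>i\<in>I'. \<forall>(v, z)\<in>T i. \<forall>k\<in>V. \<bar>v k\<bar> \<le> M i"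
    using bchoice[of I' "\<lambda>i M. \<forall>(v, z)\<in>T i. \<forall>k\<in>V. \<bar>v k\<bar> \<le> M"] assms(5) unfolding I'_def by auto
  have "milp_representable V (\<Union>i\<in>I'. {v. \<exists>z. (v, z) \<in> ineq_system V Z (m i) (A i) (D i) (c i)})"
  proof (rule milp_representable_UN_ineq_system[OF assms(1,2)])
    show "finite I'" using assms(3) by (simp add: I'_def)
    show "ineq_system V Z (m i) (A i) (D i) (c i) \<noteq> {}" if "i \<in> I'" for i
      using T[OF that] that by (simp add: I'_def)
    show "\<forall>(v, z)\<in>ineq_system V Z (m i) (A i) (D i) (c i). \<forall>k\<in>V. \<bar>v k\<bar> \<le> M i" if "i \<in> I'" for i
      using T[OF that] M that by simp
  qed
  then have "milp_representable V (\<Union>i\<in>I'. {v. \<exists>z. (v, z) \<in> T i})"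
    using T by simp
  moreover have "(\<Union>i\<in>I'. {v. \<exists>z. (v, z) \<in> T i}) = (\<Union>i\<in>I. {v. \<exists>z. (v, z) \<in> T i})"
    unfolding I'_def by auto
  ultimately show ?thesis by simp
qed

lemma linear_functional_eq_inner:
  fixes f :: "'e::euclidean_space \<Rightarrow> real"
  assumes "linear f"
  shows "f x = (\<Sum>b\<in>Basis. f b *\<^sub>R b) \<bullet> x"
proof -
  have "f x = f (\<Sum>b\<in>Basis. (x \<bullet> b) *\<^sub>R b)" by (simp add: euclidean_representation)
  also have "\<dots> = (\<Sum>b\<in>Basis. (x \<bullet> b) * f b)"
    using assms by (simp add: linear_sum linear_scale)
  also have "\<dots> = (\<Sum>b\<in>Basis. f b *\<^sub>R b) \<bullet> x"
    by (simp add: inner_sum_left mult.commute inner_commute[of x])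
  finally show ?thesis .
qed

lemma convex_cone_sum:
  assumes "convex_cone K" "finite I" "\<And>i. i \<in> I \<Longrightarrow> f i \<in> K"
  shows "(\<Sum>i\<in>I. f i) \<in> K"
  using assms(2,3) by (induction I rule: finite_induct) (use assms(1) in \<open>simp_all add: convex_cone_iff\<close>)

lemma farkas_lemma:
  fixes w :: "'i \<Rightarrow> 'a::euclidean_space"
  assumes "finite I"
  shows "(\<exists>c. (\<forall>i\<in>I. 0 \<le> c i) \<and> g = (\<Sum>i\<in>I. c i *\<^sub>R w i)) \<or> (\<exists>d. (\<forall>i\<in>I. d \<bullet> w i \<le> 0) \<and> 0 < d \<bullet> g)"
proof -
  define C where "C = {y. \<exists>c. (\<forall>i\<in>I. 0 \<le> c i) \<and> y = (\<Sum>i\<in>I. c i *\<^sub>R w i)}"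
  have "convex_cone C"
    unfolding convex_cone_iff
  proof (intro conjI ballI allI impI)
    show "0 \<in> C" unfolding C_def by (intro CollectI exI[of _ "\<lambda>_. 0"]) simp
  next
    fix x y assume "x \<in> C" "y \<in> C"
    then obtain c c' where "\<forall>i\<in>I. 0 \<le> c i" "x = (\<Sum>i\<in>I. c i *\<^sub>R w i)"
      "\<forall>i\<in>I. 0 \<le> c' i" "y = (\<Sum>i\<in>I. c' i *\<^sub>R w i)" unfolding C_def by blast
    then show "x + y \<in> C" unfolding C_def
      by (intro CollectI exI[of _ "\<lambda>i. c i + c' i"]) (simp add: scaleR_add_left sum.distrib)
  next
    fix x :: 'a and t :: real assume "x \<in> C" "0 \<le> t"
    then obtain c where "\<forall>i\<in>I. 0 \<le> c i" "x = (\<Sum>i\<in>I. c i *\<^sub>R w i)" unfolding C_def by blast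
    then show "t *\<^sub>R x \<in> C" using \<open>0 \<le> t\<close> unfolding C_def
      by (intro CollectI exI[of _ "\<lambda>i. t * c i"]) (simp add: scaleR_sum_right)
  qed
  have generators: "w ` I \<subseteq> C"
  proof
    fix y assume "y \<in> w ` I"
    then obtain i where "i \<in> I" "y = w i" by blast
    moreover have "(\<Sum>j\<in>I. (if j = i then 1 else 0) *\<^sub>R w j) = (\<Sum>j\<in>I. if j = i then w j else 0)"
      by (rule sum.cong) auto
    ultimately show "y \<in> C" using assms unfolding C_def
      by (intro CollectI exI[of _ "\<lambda>j. if j = i then 1 else 0"]) simp
  qed
  have "C \<subseteq> convex_cone hull (w ` I)"
  proof
    fix y assume "y \<in> C"
    then obtain c where c: "\<forall>i\<in>I. 0 \<le> c i" and y: "y = (\<Sum>i\<in>I. c i *\<^sub>R w i)"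
      unfolding C_def by blast
    show "y \<in> convex_cone hull (w ` I)"
      unfolding y by (rule convex_cone_sum[OF convex_cone_convex_cone_hull assms])
        (use c in \<open>auto intro: convex_cone_hull_mul hull_inc\<close>)
  qed
  then have "C = convex_cone hull (w ` I)"
    using hull_minimal[where S=convex_cone, OF generators \<open>convex_cone C\<close>] by blast
  then have "closed C" using assms by (simp add: closed_convex_cone_hull)
  show ?thesis
  proof (cases "g \<in> C")
    case True
    then show ?thesis unfolding C_def by blast
  next
    case False
    obtain a b where ab: "a \<bullet> g < b" "\<forall>x\<in>C. b < a \<bullet> x"
      using separating_hyperplane_closed_point[OF _ \<open>closed C\<close> False] \<open>convex_cone C\<close>
      by (auto simp: convex_cone_def)
    have "0 \<in> C" using \<open>convex_cone C\<close> by (simp add: convex_cone_iff)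
    then have "b < 0" using ab by force
    have "0 \<le> a \<bullet> w i" if "i \<in> I" for i
    proof (rule ccontr)
      assume neg: "\<not> 0 \<le> a \<bullet> w i"
      define t where "t = b / (a \<bullet> w i)"
      have "0 \<le> t" unfolding t_def using neg \<open>b < 0\<close> by (simp add: divide_nonpos_neg)
      then have "t *\<^sub>R w i \<in> C" using generators that \<open>convex_cone C\<close> by (auto simp: convex_cone_iff)
      moreover have "a \<bullet> (t *\<^sub>R w i) = b" unfolding t_def using neg by simp
      ultimately show False using ab by force
    qed
    then have "(\<forall>i\<in>I. (- a) \<bullet> w i \<le> 0) \<and> 0 < (- a) \<bullet> g" using ab \<open>b < 0\<close> by auto
    then show ?thesis by blast
  qed
qed

lemma eventually_at_right_affine_less:
  "a < c \<Longrightarrow> eventually (\<lambda>t. a + t * b < c) (at_right (0::real))"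
proof -
  have "((\<lambda>t. a + t * b) \<longlongrightarrow> a + 0 * b) (at_right 0)"
    by (intro tendsto_intros)
  then show "a < c \<Longrightarrow> ?thesis" by (simp add: order_tendstoD(2))
qed

text \<open>Maximising a concave quadratic plus the minimum of finitely many affine functions over
  a polyhedron \<open>{u. \<forall>r\<in>R. fst r \<bullet> u \<le> snd r}\<close>: \<open>Phi0\<close> has gradient \<open>Dq u\<close> and curvature
  \<open>Bq \<ge> 0\<close>, and the affine pieces \<open>ell \<sigma>\<close> have linear parts \<open>ll \<sigma>\<close>.\<close>

locale concave_pwl_program =
  fixes Phi0 :: "'e::euclidean_space \<Rightarrow> real" and Dq :: "'e \<Rightarrow> 'e \<Rightarrow> real" and Bq :: "'e \<Rightarrow> real"
    and ell :: "'s \<Rightarrow> 'e \<Rightarrow> real" and ll :: "'s \<Rightarrow> 'e \<Rightarrow> real"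
    and R :: "('e \<times> real) set" and S :: "'s set"
  assumes finite_R: "finite R" and finite_S: "finite S" and S_nonempty: "S \<noteq> {}"
    and Phi0_add: "\<And>u d. Phi0 (u + d) = Phi0 u + Dq u d - Bq d"
    and linear_Dq: "\<And>u. linear (Dq u)"
    and Bq_scaleR: "\<And>t d. Bq (t *\<^sub>R d) = t\<^sup>2 * Bq d"
    and Bq_nonneg: "\<And>d. 0 \<le> Bq d"
    and ell_add: "\<And>\<sigma> u d. ell \<sigma> (u + d) = ell \<sigma> u + ll \<sigma> d"
    and linear_ll: "\<And>\<sigma>. linear (ll \<sigma>)"
begin

definition feasible :: "'e \<Rightarrow> bool" where
  "feasible u \<longleftrightarrow> (\<forall>r\<in>R. fst r \<bullet> u \<le> snd r)"

definition objective :: "'e \<Rightarrow> real" where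
  "objective u = Phi0 u + Min ((\<lambda>\<sigma>. ell \<sigma> u) ` S)"

definition kkt_certificate :: "'e \<Rightarrow> ('e \<times> real) set \<Rightarrow> 's set \<Rightarrow> ('e \<times> real \<Rightarrow> real) \<Rightarrow> ('s \<Rightarrow> real) \<Rightarrow> real \<Rightarrow> bool"
  where
  "kkt_certificate us I A lam mu s \<longleftrightarrow> I \<subseteq> R \<and> A \<subseteq> S
     \<and> (\<forall>r\<in>I. 0 \<le> lam r \<and> fst r \<bullet> us = snd r) \<and> (\<forall>\<sigma>\<in>A. 0 \<le> mu \<sigma> \<and> ell \<sigma> us = s)
     \<and> (\<forall>\<sigma>\<in>S. s \<le> ell \<sigma> us) \<and> (\<Sum>\<sigma>\<in>A. mu \<sigma>) = 1
     \<and> (\<forall>b\<in>Basis. Dq us b + (\<Sum>\<sigma>\<in>A. mu \<sigma> * ll \<sigma> b) = (\<Sum>r\<in>I. lam r * (fst r \<bullet> b)))"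

lemma Min_ell_eq: "(\<forall>\<sigma>\<in>A. ell \<sigma> u = s) \<Longrightarrow> (\<forall>\<sigma>\<in>S. s \<le> ell \<sigma> u) \<Longrightarrow> A \<subseteq> S \<Longrightarrow> A \<noteq> {} \<Longrightarrow>
    Min ((\<lambda>\<sigma>. ell \<sigma> u) ` S) = s"
  using finite_S by (intro Min_eqI) auto

lemma kkt_sufficient:
  assumes kkt: "kkt_certificate us I A lam mu s" and "feasible u"
  shows "objective u \<le> objective us"
proof -
  have IR: "I \<subseteq> R" and AS: "A \<subseteq> S" and lam: "\<forall>r\<in>I. 0 \<le> lam r \<and> fst r \<bullet> us = snd r"
    and mu: "\<forall>\<sigma>\<in>A. 0 \<le> mu \<sigma> \<and> ell \<sigma> us = s" and s_le: "\<forall>\<sigma>\<in>S. s \<le> ell \<sigma> us"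
    and mu1: "(\<Sum>\<sigma>\<in>A. mu \<sigma>) = 1"
    and stat: "\<forall>b\<in>Basis. Dq us b + (\<Sum>\<sigma>\<in>A. mu \<sigma> * ll \<sigma> b) = (\<Sum>r\<in>I. lam r * (fst r \<bullet> b))"
    using kkt unfolding kkt_certificate_def by auto
  have "finite A" using AS finite_S finite_subset by blast
  define d where "d = u - us"
  then have u: "u = us + d" by simp
  have "linear (\<lambda>x. Dq us x + (\<Sum>\<sigma>\<in>A. mu \<sigma> * ll \<sigma> x))"
    by (rule linearI) (simp_all add: linear_add[OF linear_Dq] linear_scale[OF linear_Dq] linear_add[OF linear_ll]
        linear_scale[OF linear_ll] sum.distrib sum_distrib_left algebra_simps)
  moreover have "linear (\<lambda>x. \<Sum>r\<in>I. lam r * (fst r \<bullet> x))"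
    by (rule linearI) (simp_all add: inner_add_right sum.distrib sum_distrib_left algebra_simps)
  ultimately have "(\<lambda>x. Dq us x + (\<Sum>\<sigma>\<in>A. mu \<sigma> * ll \<sigma> x)) = (\<lambda>x. \<Sum>r\<in>I. lam r * (fst r \<bullet> x))"
    using stat by (intro linear_eq_stdbasis) auto
  then have stat_d: "Dq us d + (\<Sum>\<sigma>\<in>A. mu \<sigma> * ll \<sigma> d) = (\<Sum>r\<in>I. lam r * (fst r \<bullet> d))"
    by (rule fun_cong)
  \<comment> \<open>the multipliers certify that \<open>d\<close> does not increase the linearised objective\<close>
  have "(\<Sum>r\<in>I. lam r * (fst r \<bullet> d)) \<le> 0"
  proof (rule sum_nonpos)
    fix r assume "r \<in> I"
    then have "fst r \<bullet> d \<le> 0"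
      using \<open>feasible u\<close> lam IR by (auto simp: feasible_def d_def inner_diff_right)
    then show "lam r * (fst r \<bullet> d) \<le> 0" using lam \<open>r \<in> I\<close> by (simp add: mult_nonneg_nonpos)
  qed
  have "Min ((\<lambda>\<sigma>. ell \<sigma> u) ` S) \<le> (\<Sum>\<sigma>\<in>A. mu \<sigma> * ell \<sigma> u)"
  proof -
    have "Min ((\<lambda>\<sigma>. ell \<sigma> u) ` S) = (\<Sum>\<sigma>\<in>A. mu \<sigma> * Min ((\<lambda>\<sigma>. ell \<sigma> u) ` S))"
      by (simp add: sum_distrib_right[symmetric] mu1)
    also have "\<dots> \<le> (\<Sum>\<sigma>\<in>A. mu \<sigma> * ell \<sigma> u)"
      using AS mu finite_S by (intro sum_mono mult_left_mono Min_le) auto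
    finally show ?thesis .
  qed
  also have "(\<Sum>\<sigma>\<in>A. mu \<sigma> * ell \<sigma> u) = s + (\<Sum>\<sigma>\<in>A. mu \<sigma> * ll \<sigma> d)"
    using mu unfolding u ell_add
    by (simp add: algebra_simps sum.distrib sum_distrib_left[symmetric] mu1)
  finally have "Min ((\<lambda>\<sigma>. ell \<sigma> u) ` S) \<le> s + (\<Sum>\<sigma>\<in>A. mu \<sigma> * ll \<sigma> d)" .
  moreover have "Min ((\<lambda>\<sigma>. ell \<sigma> us) ` S) = s"
    using mu s_le AS mu1 by (intro Min_ell_eq) auto
  moreover have "Phi0 u = Phi0 us + Dq us d - Bq d" unfolding u by (rule Phi0_add)
  ultimately show ?thesis
    using stat_d \<open>(\<Sum>r\<in>I. lam r * (fst r \<bullet> d)) \<le> 0\<close> Bq_nonneg[of d] unfolding objective_def by linarith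
qed

lemma ascent_direction:
  assumes "feasible us"
    and active_R: "\<forall>r\<in>R. fst r \<bullet> us = snd r \<longrightarrow> fst r \<bullet> du \<le> 0"
    and active_S: "\<forall>\<sigma>\<in>S. ell \<sigma> us = Min ((\<lambda>\<sigma>. ell \<sigma> us) ` S) \<longrightarrow> ds \<le> ll \<sigma> du"
    and ascent: "0 < Dq us du + ds"
  obtains u where "feasible u" "objective us < objective u"
proof -
  define s where "s = Min ((\<lambda>\<sigma>. ell \<sigma> us) ` S)"
  have s_le: "s \<le> ell \<sigma> us" if "\<sigma> \<in> S" for \<sigma> using finite_S that by (simp add: s_def)
  have ell_step: "ell \<sigma> (us + t *\<^sub>R du) = ell \<sigma> us + t * ll \<sigma> du" for \<sigma> t
    by (simp add: ell_add linear_scale[OF linear_ll])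
  have ev_row: "eventually (\<lambda>t. fst r \<bullet> (us + t *\<^sub>R du) \<le> snd r) (at_right 0)" if "r \<in> R" for r
  proof (cases "fst r \<bullet> us = snd r")
    case True
    show ?thesis using eventually_at_right_less[of 0]
      by eventually_elim (use True active_R that in \<open>auto simp: inner_add_right mult_nonneg_nonpos\<close>)
  next
    case False
    then have "fst r \<bullet> us < snd r" using \<open>feasible us\<close> that by (auto simp: feasible_def)
    from eventually_at_right_affine_less[OF this, of "fst r \<bullet> du"]
    show ?thesis by eventually_elim (simp add: inner_add_right)
  qed
  have ev_feasible: "eventually (\<lambda>t. feasible (us + t *\<^sub>R du)) (at_right 0)"
    using ev_row by (simp add: feasible_def eventually_ball_finite_distrib[OF finite_R])
  have ev_piece: "eventually (\<lambda>t. s + t * ds \<le> ell \<sigma> (us + t *\<^sub>R du)) (at_right 0)" if "\<sigma> \<in> S" for \<sigma>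
  proof (cases "ell \<sigma> us = s")
    case True
    show ?thesis using eventually_at_right_less[of 0]
      by eventually_elim (use True active_S that in \<open>auto simp: ell_step s_def mult_left_mono\<close>)
  next
    case False
    then have "s - ell \<sigma> us < 0" using s_le[OF that] by simp
    from eventually_at_right_affine_less[OF this, of "ds - ll \<sigma> du"]
    show ?thesis by eventually_elim (simp add: ell_step algebra_simps)
  qed
  have "eventually (\<lambda>t. \<forall>\<sigma>\<in>S. s + t * ds \<le> ell \<sigma> (us + t *\<^sub>R du)) (at_right 0)"
    using ev_piece by (simp add: eventually_ball_finite_distrib[OF finite_S])
  then have ev_Min: "eventually (\<lambda>t. s + t * ds \<le> Min ((\<lambda>\<sigma>. ell \<sigma> (us + t *\<^sub>R du)) ` S)) (at_right 0)"
    by eventually_elim (use finite_S S_nonempty in auto)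
  have ev_step: "eventually (\<lambda>t. 0 < t \<and> t * Bq du < Dq us du + ds) (at_right 0)"
    using eventually_at_right_less[of 0] eventually_at_right_affine_less[OF ascent, of "Bq du"]
    by eventually_elim simp
  obtain t where t: "feasible (us + t *\<^sub>R du)" "s + t * ds \<le> Min ((\<lambda>\<sigma>. ell \<sigma> (us + t *\<^sub>R du)) ` S)"
    "0 < t" "t * Bq du < Dq us du + ds"
    using eventually_happens'[OF trivial_limit_at_right_real eventually_conj[OF ev_feasible
        eventually_conj[OF ev_Min ev_step]]] by blast
  \<comment> \<open>the first-order gain \<open>t (Dq us du + ds)\<close> beats the second-order loss \<open>t\<^sup>2 Bq du\<close>\<close>
  have "t * (t * Bq du) < t * (Dq us du + ds)" using t(3,4) by simp
  moreover have "Phi0 (us + t *\<^sub>R du) = Phi0 us + t * Dq us du - t\<^sup>2 * Bq du"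
    by (simp add: Phi0_add Bq_scaleR linear_scale[OF linear_Dq])
  ultimately have "objective us < objective (us + t *\<^sub>R du)"
    using t(2) unfolding objective_def s_def[symmetric] by (simp add: power2_eq_square algebra_simps)
  with t(1) show ?thesis by (rule that)
qed

text \<open>Farkas' lemma applied to the gradients of the active constraints and active pieces
  yields either the multipliers or an ascent direction \<open>(du, ds)\<close> of the linearisation.\<close>

lemma kkt_necessary:
  assumes "feasible us" and opt: "\<forall>u. feasible u \<longrightarrow> objective u \<le> objective us"
  shows "\<exists>I A lam mu s. kkt_certificate us I A lam mu s"
proof -
  define s where "s = Min ((\<lambda>\<sigma>. ell \<sigma> us) ` S)"
  define I where "I = {r\<in>R. fst r \<bullet> us = snd r}"
  define A where "A = {\<sigma>\<in>S. ell \<sigma> us = s}"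
  have "finite I" "finite A" using finite_R finite_S by (simp_all add: I_def A_def)
  have s_le: "\<forall>\<sigma>\<in>S. s \<le> ell \<sigma> us" unfolding s_def using finite_S by auto
  define gl where "gl \<sigma> = (\<Sum>b\<in>Basis. ll \<sigma> b *\<^sub>R b)" for \<sigma>
  define gD where "gD = (\<Sum>b\<in>Basis. Dq us b *\<^sub>R b)"
  have gl: "ll \<sigma> x = gl \<sigma> \<bullet> x" for \<sigma> x unfolding gl_def by (rule linear_functional_eq_inner[OF linear_ll])
  have gD: "Dq us x = gD \<bullet> x" for x unfolding gD_def by (rule linear_functional_eq_inner[OF linear_Dq])
  define w :: "('e \<times> real) + 's \<Rightarrow> 'e \<times> real" where
    "w i = (case i of Inl r \<Rightarrow> (fst r, 0) | Inr \<sigma> \<Rightarrow> (- gl \<sigma>, 1))" for i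
  from farkas_lemma[of "I <+> A" "(gD, 1::real)" w] \<open>finite I\<close> \<open>finite A\<close>
  consider (multipliers) c where "\<forall>i\<in>I <+> A. 0 \<le> c i" "(gD, 1::real) = (\<Sum>i\<in>I <+> A. c i *\<^sub>R w i)"
    | (ascent) d where "\<forall>i\<in>I <+> A. d \<bullet> w i \<le> 0" "0 < d \<bullet> (gD, 1::real)"
    by auto
  then show ?thesis
  proof cases
    case multipliers
    have eq: "(gD, 1::real) = (\<Sum>r\<in>I. c (Inl r) *\<^sub>R (fst r, 0)) + (\<Sum>\<sigma>\<in>A. c (Inr \<sigma>) *\<^sub>R (- gl \<sigma>, 1))"
      using multipliers(2) \<open>finite I\<close> \<open>finite A\<close> by (simp add: sum.Plus w_def comp_def)
    have "gD = (\<Sum>r\<in>I. c (Inl r) *\<^sub>R fst r) - (\<Sum>\<sigma>\<in>A. c (Inr \<sigma>) *\<^sub>R gl \<sigma>)"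
      using arg_cong[OF eq, of fst] by (simp add: fst_sum sum_negf)
    then have "\<forall>b\<in>Basis. Dq us b + (\<Sum>\<sigma>\<in>A. c (Inr \<sigma>) * ll \<sigma> b) = (\<Sum>r\<in>I. c (Inl r) * (fst r \<bullet> b))"
      by (simp add: gD gl inner_diff_left inner_sum_left)
    moreover have "(\<Sum>\<sigma>\<in>A. c (Inr \<sigma>)) = 1"
      using arg_cong[OF eq, of snd] by (simp add: snd_sum)
    ultimately have "kkt_certificate us I A (c \<circ> Inl) (c \<circ> Inr) s"
      using multipliers(1) s_le unfolding kkt_certificate_def I_def A_def by auto
    then show ?thesis by blast
  next
    case ascent
    have "fst r \<bullet> fst d \<le> 0" if "r \<in> I" for r
    proof -
      have "d \<bullet> w (Inl r) \<le> 0" using ascent(1) that by blast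
      then show ?thesis unfolding w_def by (cases d) (simp add: inner_commute)
    qed
    moreover have "snd d \<le> ll \<sigma> (fst d)" if "\<sigma> \<in> A" for \<sigma>
    proof -
      have "d \<bullet> w (Inr \<sigma>) \<le> 0" using ascent(1) that by blast
      then show ?thesis unfolding w_def gl by (cases d) (simp add: inner_commute)
    qed
    moreover have "0 < Dq us (fst d) + snd d"
      using ascent(2) unfolding gD by (cases d) (simp add: inner_commute)
    ultimately obtain u where "feasible u" "objective us < objective u"
      using ascent_direction[OF \<open>feasible us\<close>] unfolding I_def A_def s_def by blast
    then show ?thesis using opt by fastforce
  qed
qed

theorem max_iff_kkt:
  assumes "feasible us"
  shows "(\<forall>u. feasible u \<longrightarrow> objective u \<le> objective us) \<longleftrightarrow> (\<exists>I A lam mu s. kkt_certificate us I A lam mu s)"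
  using kkt_necessary[OF assms] kkt_sufficient by blast

end

lemma polyhedron_obtain_rows:
  fixes S :: "'a::euclidean_space set"
  assumes "polyhedron S"
  obtains R where "finite R" "S = {x. \<forall>r\<in>R. fst r \<bullet> x \<le> snd r}"
proof -
  obtain F where F: "finite F" "S = \<Inter>F" "\<forall>h\<in>F. \<exists>a b. a \<noteq> 0 \<and> h = {x. a \<bullet> x \<le> b}"
    using assms unfolding polyhedron_def by blast
  then have "\<forall>h\<in>F. \<exists>r. h = {x. fst r \<bullet> x \<le> snd r}" by fastforce
  then obtain row where "\<forall>h\<in>F. h = {x. fst (row h) \<bullet> x \<le> snd (row h)}" by (metis bchoice)
  then have "S = {x. \<forall>r\<in>row ` F. fst r \<bullet> x \<le> snd r}" using F(2) by blast
  with F(1) show ?thesis by (intro that[of "row ` F"]) auto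
qed

lemma bounded_obtain_component_bound:
  assumes "bounded (S :: (real^'n) set)"
  obtains B where "\<forall>x\<in>S. \<forall>i. \<bar>x $ i\<bar> \<le> B"
  using assms component_le_norm_cart order_trans unfolding bounded_iff by metis

definition cube :: "real \<Rightarrow> (real^'n) set" where
  "cube B = cbox (- (\<chi> _. B)) (\<chi> _. B)"

lemma bounded_cube: "bounded (cube B)"
  by (simp add: cube_def)

lemma bounded_subset_cube:
  assumes "bounded (S :: (real^'n) set)"
  obtains B where "S \<subseteq> cube B"
proof -
  obtain B where B: "\<forall>x\<in>S. \<forall>i. \<bar>x $ i\<bar> \<le> B" using assms by (rule bounded_obtain_component_bound)
  show ?thesis
  proof (intro that subsetI)
    fix x assume "x \<in> S"
    then have xB: "\<bar>x $ i\<bar> \<le> B" for i using B by blast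
    have "- B \<le> x $ i \<and> x $ i \<le> B" for i using xB[of i] by (metis abs_le_D1 abs_le_D2 minus_le_iff)
    then show "x \<in> cube B" by (simp add: cube_def mem_box_cart)
  qed
qed

lemma affine_system_const: "affine_system V Z {(v, z). b}"
proof (cases b)
  case True
  then show ?thesis using affine_system_UNIV by (simp add: case_prod_unfold)
next
  case False
  have "affine_system V Z {(v, z). 1 \<le> (0::real)}"
    by (intro affine_system_le affine_expr2_left affine_expr_const)
  with False show ?thesis by simp
qed

lemma affine_system_polyhedron:
  fixes x :: "('v \<Rightarrow> real) \<Rightarrow> real^'n::finite"
  assumes "polyhedron S" "finite V" "affine_vec V x"
  shows "affine_system V Z {(v, z). x v \<in> S}"
proof -
  obtain R where R: "finite R" "S = {x. \<forall>r\<in>R. fst r \<bullet> x \<le> snd r}"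
    using assms(1) by (rule polyhedron_obtain_rows)
  show ?thesis
    unfolding R(2) mem_Collect_eq
    by (intro affine_system_ball affine_system_le affine_expr2_left affine_expr_inner_left affine_expr_const
          R(1) assms(2,3))
qed

lemma milp_representable_polyhedron:
  fixes x :: "('v \<Rightarrow> real) \<Rightarrow> real^'n::finite"
  assumes "polyhedron S" "finite V" "affine_vec V x"
  shows "milp_representable V {v. x v \<in> S}"
  using milp_representable_projection[OF assms(2) finite.emptyI order_refl
      affine_system_polyhedron[OF assms, where Z="{}::unit set"]]
  by simp

lemma milp_representable_milp_set:
  fixes k :: "'n::finite \<Rightarrow> 'v"
  assumes "inj k" "milp_set S"
  shows "milp_representable (range k) {v. (\<chi> i. v (k i)) \<in> S}"
proof -
  obtain m A B p E q c where
    S: "vec_nth ` S = {y. \<exists>(z::nat \<Rightarrow> real) (w::nat \<Rightarrow> int). \<forall>r<(m::nat). (\<Sum>i\<in>UNIV. A r i * y i)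
        + (\<Sum>j<p. B r j * z j) + (\<Sum>j<q. E r j * of_int (w j)) \<le> c r}"
    using assms(2) unfolding milp_set_def by (elim milp_representableE) blast
  have "(\<chi> i. v (k i)) \<in> S \<longleftrightarrow> (\<lambda>i. v (k i)) \<in> vec_nth ` S" for v
    by (metis (no_types, lifting) image_iff vec_lambda_eta vec_lambda_inverse UNIV_I)
  moreover have "(\<Sum>l\<in>range k. A r (inv k l) * v l) = (\<Sum>i\<in>UNIV. A r i * v (k i))" for r v
    using assms(1) by (simp add: sum.reindex)
  ultimately show ?thesis
    using milp_representableI[of "range k" "{..<m}" "{..<p}" "{..<q}" "\<lambda>r l. A r (inv k l)" B E c]
    unfolding S by (simp add: Ball_def)
qed

lemma vcat_add: "vcat (a + b) (c + d) = vcat a c + vcat b d"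
  by (simp add: vcat_def vec_eq_iff split: sum.splits)

lemma vcat_scaleR: "vcat (t *\<^sub>R a) (t *\<^sub>R b) = t *\<^sub>R vcat a b"
  by (simp add: vcat_def vec_eq_iff split: sum.splits)

lemma sum_Min_PiE:
  fixes f :: "'i \<Rightarrow> 'j \<Rightarrow> real"
  assumes "finite K" "\<And>i. i \<in> K \<Longrightarrow> finite (J i) \<and> J i \<noteq> {}"
  shows "(\<Sum>i\<in>K. Min (f i ` J i)) = Min ((\<lambda>\<sigma>. \<Sum>i\<in>K. f i (\<sigma> i)) ` PiE K J)"
proof -
  have "\<forall>i\<in>K. \<exists>j. j \<in> J i \<and> f i j = Min (f i ` J i)"
  proof
    fix i assume "i \<in> K"
    then have "Min (f i ` J i) \<in> f i ` J i" using assms(2) by (intro Min_in) auto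
    then show "\<exists>j. j \<in> J i \<and> f i j = Min (f i ` J i)" by force
  qed
  from bchoice[OF this] obtain \<sigma>0 where \<sigma>0: "\<forall>i\<in>K. \<sigma>0 i \<in> J i \<and> f i (\<sigma>0 i) = Min (f i ` J i)"
    by blast
  show ?thesis
  proof (rule Min_eqI[symmetric])
    show "finite ((\<lambda>\<sigma>. \<Sum>i\<in>K. f i (\<sigma> i)) ` PiE K J)" using assms by (simp add: finite_PiE)
  next
    fix y assume "y \<in> (\<lambda>\<sigma>. \<Sum>i\<in>K. f i (\<sigma> i)) ` PiE K J"
    then obtain \<sigma> where "\<sigma> \<in> PiE K J" "y = (\<Sum>i\<in>K. f i (\<sigma> i))" by blast
    then show "(\<Sum>i\<in>K. Min (f i ` J i)) \<le> y"
      using assms(2) by (auto intro!: sum_mono Min_le simp: PiE_def Pi_def)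
  next
    have "restrict \<sigma>0 K \<in> PiE K J" using \<sigma>0 by auto
    moreover have "(\<Sum>i\<in>K. f i (restrict \<sigma>0 K i)) = (\<Sum>i\<in>K. Min (f i ` J i))"
      using \<sigma>0 by (intro sum.cong) auto
    ultimately show "(\<Sum>i\<in>K. Min (f i ` J i)) \<in> (\<lambda>\<sigma>. \<Sum>i\<in>K. f i (\<sigma> i)) ` PiE K J"
      by (intro image_eqI[of _ _ "restrict \<sigma>0 K"]) simp_all
  qed
qed


definition traj_x :: "(('nx::finite, 'nu::finite, 'nt::finite, 'np::finite) dvar \<Rightarrow> real) \<Rightarrow> nat \<Rightarrow> real^'nx"
  where "traj_x v t = (\<chi> i. v (VX t i))"

definition traj_u :: "(('nx::finite, 'nu::finite, 'nt::finite, 'np::finite) dvar \<Rightarrow> real) \<Rightarrow> nat \<Rightarrow> real^'nu"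
  where "traj_u v t = (\<chi> i. v (VU t i))"

definition traj_\<theta> :: "(('nx::finite, 'nu::finite, 'nt::finite, 'np::finite) dvar \<Rightarrow> real) \<Rightarrow> nat \<Rightarrow> real^'nt"
  where "traj_\<theta> v t = (\<chi> i. v (VT t i))"

definition traj_\<pi> :: "(('nx::finite, 'nu::finite, 'nt::finite, 'np::finite) dvar \<Rightarrow> real) \<Rightarrow> nat \<Rightarrow> real^'np"
  where "traj_\<pi> v t = (\<chi> i. v (VP t i))"

definition step_vars :: "nat \<Rightarrow> ('nx::finite, 'nu::finite, 'nt::finite, 'np::finite) dvar set" where
  "step_vars t = range (VX t) \<union> range (VU t) \<union> range (VT t) \<union> range (VP t)"

lemma finite_step_vars: "finite (step_vars t)"
  by (simp add: step_vars_def)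

lemma affine_vec_traj:
  assumes "finite V"
  shows "range (VX t) \<subseteq> V \<Longrightarrow> affine_vec V (\<lambda>v. traj_x v t)"
    and "range (VU t) \<subseteq> V \<Longrightarrow> affine_vec V (\<lambda>v. traj_u v t)"
    and "range (VT t) \<subseteq> V \<Longrightarrow> affine_vec V (\<lambda>v. traj_\<theta> v t)"
    and "range (VP t) \<subseteq> V \<Longrightarrow> affine_vec V (\<lambda>v. traj_\<pi> v t)"
  unfolding traj_x_def traj_u_def traj_\<theta>_def traj_\<pi>_def using assms by (simp_all add: affine_vec_var)

definition step_domain ::
  "(real^'nx) set \<Rightarrow> (real^'nu) set \<Rightarrow> (real^'nt) set \<Rightarrow> (real^'np) set
    \<Rightarrow> (('nx::finite, 'nu::finite, 'nt::finite, 'np::finite) dvar \<Rightarrow> real) \<Rightarrow> nat \<Rightarrow> bool" where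
  "step_domain X U Th P v t \<longleftrightarrow> traj_x v t \<in> X \<and> traj_u v t \<in> U \<and> traj_\<theta> v t \<in> Th \<and> traj_\<pi> v t \<in> P"

lemma affine_system_step_domain:
  assumes "polyhedron X" "polyhedron U" "polyhedron Th" "finite V" "step_vars t \<subseteq> V"
  shows "affine_system V Z {(v, z). step_domain X U Th (cube B) v t}"
  unfolding step_domain_def cube_def using assms(5)
  by (intro affine_system_conj affine_system_polyhedron affine_vec_traj polyhedron_interval assms(1-4))
     (auto simp: step_vars_def)

lemma step_domain_bounded:
  assumes "bounded X" "bounded U" "bounded Th" "bounded P"
  obtains M where "\<And>v. step_domain X U Th P v t \<Longrightarrow> \<forall>k\<in>step_vars t. \<bar>v k\<bar> \<le> M"
proof -
  obtain BX where BX: "\<forall>x\<in>X. \<forall>i. \<bar>x $ i\<bar> \<le> BX" using assms(1) by (rule bounded_obtain_component_bound)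
  obtain BU where BU: "\<forall>x\<in>U. \<forall>i. \<bar>x $ i\<bar> \<le> BU" using assms(2) by (rule bounded_obtain_component_bound)
  obtain BT where BT: "\<forall>x\<in>Th. \<forall>i. \<bar>x $ i\<bar> \<le> BT" using assms(3) by (rule bounded_obtain_component_bound)
  obtain BP where BP: "\<forall>x\<in>P. \<forall>i. \<bar>x $ i\<bar> \<le> BP" using assms(4) by (rule bounded_obtain_component_bound)
  have "\<bar>v k\<bar> \<le> max (max BX BU) (max BT BP)" if dom: "step_domain X U Th P v t"
    and k: "k \<in> step_vars t" for v k
  proof -
    have mem: "traj_x v t \<in> X" "traj_u v t \<in> U" "traj_\<theta> v t \<in> Th" "traj_\<pi> v t \<in> P"
      using dom unfolding step_domain_def by simp_all
    have "\<bar>v (VX t a)\<bar> \<le> BX" "\<bar>v (VU t b)\<bar> \<le> BU" "\<bar>v (VT t c)\<bar> \<le> BT" "\<bar>v (VP t d)\<bar> \<le> BP"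
      for a b c d
      using BX mem(1) BU mem(2) BT mem(3) BP mem(4)
      by (fastforce simp: traj_x_def traj_u_def traj_\<theta>_def traj_\<pi>_def)+
    moreover obtain a b c d where "k = VX t a \<or> k = VU t b \<or> k = VT t c \<or> k = VP t d"
      using k unfolding step_vars_def by blast
    ultimately show ?thesis by (metis le_max_iff_disj)
  qed
  then show ?thesis by (intro that) blast
qed

lemma affine_vec_nth: "affine_vec V e \<Longrightarrow> affine_expr V (\<lambda>v. e v $ i)"
  by (simp add: affine_vec_def)

lemma milp_representable_affine_update:
  fixes Ah :: "real^'nx::finite^'nx" and Bh :: "real^'nu::finite^'nx" and kh :: "real^'nx"
  shows "milp_representable (step_vars t \<union> range (VX (Suc t)) :: ('nx, 'nu, 'nt::finite, 'np::finite) dvar set)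
    {v. traj_x v (Suc t) = Ah *v traj_x v t + Bh *v traj_u v t + kh}"
proof -
  let ?V = "step_vars t \<union> range (VX (Suc t)) :: ('nx, 'nu, 'nt, 'np) dvar set"
  have "finite ?V" by (simp add: finite_step_vars)
  then have "affine_system ?V ({}::unit set)
      {(v, z). \<forall>j. traj_x v (Suc t) $ j = (Ah *v traj_x v t + Bh *v traj_u v t + kh) $ j}"
    by (intro affine_system_all affine_system_eq affine_expr2_left affine_vec_nth affine_vec_add
          affine_vec_matrix_vector_mult affine_vec_const affine_vec_traj) (auto simp: step_vars_def)
  from milp_representable_projection[OF \<open>finite ?V\<close> finite.emptyI order_refl this]
  show ?thesis by (simp add: vec_eq_iff)
qed

lemma milp_representable_piecewise_affine_update:
  fixes g :: "real^'nx::finite \<Rightarrow> real^'nu::finite \<Rightarrow> real^'nt::finite \<Rightarrow> real^'np::finite \<Rightarrow> real^'nt"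
    and rows :: "nat \<Rightarrow> nat"
  assumes "polyhedron X" "polyhedron U" "polyhedron Th" "bounded X" "bounded U" "bounded Th"
    and "P \<subseteq> cube B"
    and piece: "\<And>x u \<theta> \<pi> i. x \<in> X \<Longrightarrow> u \<in> U \<Longrightarrow> \<theta> \<in> Th \<Longrightarrow> \<pi> \<in> P \<Longrightarrow> i < npc \<Longrightarrow>
        \<forall>l<rows i. Bp i l \<bullet> vcat (vcat x u) (vcat \<theta> \<pi>) \<le> \<psi> i l \<Longrightarrow>
        g x u \<theta> \<pi> = Gp i *v vcat (vcat x u) (vcat \<theta> \<pi>) + \<chi>p i"
    and cover: "\<And>x u \<theta> \<pi>. x \<in> X \<Longrightarrow> u \<in> U \<Longrightarrow> \<theta> \<in> Th \<Longrightarrow> \<pi> \<in> P \<Longrightarrow>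
        \<exists>i<npc. \<forall>l<rows i. Bp i l \<bullet> vcat (vcat x u) (vcat \<theta> \<pi>) \<le> \<psi> i l"
    and maps_into: "\<And>x u \<theta> \<pi>. x \<in> X \<Longrightarrow> u \<in> U \<Longrightarrow> \<theta> \<in> Th \<Longrightarrow> \<pi> \<in> P \<Longrightarrow> g x u \<theta> \<pi> \<in> Th"
  obtains SG where
    "milp_representable (step_vars t \<union> range (VT (Suc t)) :: ('nx, 'nu, 'nt, 'np) dvar set) SG"
    "\<And>v. step_domain X U Th P v t \<Longrightarrow>
       v \<in> SG \<longleftrightarrow> traj_\<theta> v (Suc t) = g (traj_x v t) (traj_u v t) (traj_\<theta> v t) (traj_\<pi> v t)"
proof -
  let ?V = "step_vars t \<union> range (VT (Suc t)) :: ('nx, 'nu, 'nt, 'np) dvar set"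
  define W where "W v = vcat (vcat (traj_x v t) (traj_u v t)) (vcat (traj_\<theta> v t) (traj_\<pi> v t))"
    for v :: "('nx, 'nu, 'nt, 'np) dvar \<Rightarrow> real"
  define TG where "TG i = {(v, z::unit \<Rightarrow> real). step_domain X U Th (cube B) v t \<and> traj_\<theta> v (Suc t) \<in> Th
      \<and> (\<forall>l\<in>{..<rows i}. Bp i l \<bullet> W v \<le> \<psi> i l) \<and> (\<forall>j. traj_\<theta> v (Suc t) $ j = (Gp i *v W v + \<chi>p i) $ j)}"
    for i
  have "finite ?V" by (simp add: finite_step_vars)
  have "affine_vec ?V W"
    unfolding W_def using \<open>finite ?V\<close>
    by (intro affine_vec_vcat affine_vec_traj) (auto simp: step_vars_def)
  then have "affine_system ?V {} (TG i)" for i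
    unfolding TG_def using \<open>finite ?V\<close> assms(1-3)
    by (intro affine_system_conj affine_system_step_domain affine_system_polyhedron affine_system_ball
          affine_system_all affine_system_le affine_system_eq affine_expr2_left affine_expr_inner_left
          affine_expr_const affine_vec_nth affine_vec_add affine_vec_matrix_vector_mult affine_vec_const
          affine_vec_traj finite_lessThan) (auto simp: step_vars_def)
  moreover have "\<exists>M. \<forall>(v, z)\<in>TG i. \<forall>k\<in>?V. \<bar>v k\<bar> \<le> M" for i
  proof -
    obtain M where M: "\<And>v :: ('nx, 'nu, 'nt, 'np) dvar \<Rightarrow> real.
        step_domain X U Th (cube B) v t \<Longrightarrow> \<forall>k\<in>step_vars t. \<bar>v k\<bar> \<le> M"
      using step_domain_bounded assms(4-6) bounded_cbox unfolding cube_def by metis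
    obtain BT where BT: "\<forall>x\<in>Th. \<forall>i. \<bar>x $ i\<bar> \<le> BT" using assms(6) by (rule bounded_obtain_component_bound)
    have "\<bar>v k\<bar> \<le> max M BT" if "(v, z) \<in> TG i" "k \<in> ?V" for v z k
    proof -
      have "step_domain X U Th (cube B) v t" "traj_\<theta> v (Suc t) \<in> Th" using that(1) unfolding TG_def by auto
      moreover have "\<bar>v (VT (Suc t) j)\<bar> \<le> BT" if "traj_\<theta> v (Suc t) \<in> Th" for j
        using BT that unfolding traj_\<theta>_def by fastforce
      ultimately show ?thesis using that(2) M by (auto simp: le_max_iff_disj)
    qed
    then show ?thesis by blast
  qed
  ultimately have "milp_representable ?V (\<Union>i\<in>{..<npc}. {v. \<exists>z. (v, z) \<in> TG i})"
    using \<open>finite ?V\<close> by (intro milp_representable_UN_affine_system) auto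
  moreover have "v \<in> (\<Union>i\<in>{..<npc}. {v. \<exists>z. (v, z) \<in> TG i}) \<longleftrightarrow>
      traj_\<theta> v (Suc t) = g (traj_x v t) (traj_u v t) (traj_\<theta> v t) (traj_\<pi> v t)"
    if dom: "step_domain X U Th P v t" for v
  proof
    assume "v \<in> (\<Union>i\<in>{..<npc}. {v. \<exists>z. (v, z) \<in> TG i})"
    then obtain i where "i < npc" "\<forall>l<rows i. Bp i l \<bullet> W v \<le> \<psi> i l"
      "traj_\<theta> v (Suc t) = Gp i *v W v + \<chi>p i"
      unfolding TG_def by (auto simp: vec_eq_iff)
    then show "traj_\<theta> v (Suc t) = g (traj_x v t) (traj_u v t) (traj_\<theta> v t) (traj_\<pi> v t)"
      using piece dom unfolding step_domain_def W_def by metis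
  next
    assume eq: "traj_\<theta> v (Suc t) = g (traj_x v t) (traj_u v t) (traj_\<theta> v t) (traj_\<pi> v t)"
    obtain i where i: "i < npc" "\<forall>l<rows i. Bp i l \<bullet> W v \<le> \<psi> i l"
      using cover dom unfolding step_domain_def W_def by blast
    have "g (traj_x v t) (traj_u v t) (traj_\<theta> v t) (traj_\<pi> v t) = Gp i *v W v + \<chi>p i"
      using piece[OF _ _ _ _ i(1) i(2)[unfolded W_def]] dom unfolding step_domain_def W_def by blast
    then have "traj_\<theta> v (Suc t) = Gp i *v W v + \<chi>p i" using eq by simp
    moreover have "traj_\<theta> v (Suc t) \<in> Th" using maps_into dom eq unfolding step_domain_def by auto
    moreover have "step_domain X U Th (cube B) v t" using dom assms(7) by (auto simp: step_domain_def)
    ultimately show "v \<in> (\<Union>i\<in>{..<npc}. {v. \<exists>z. (v, z) \<in> TG i})" unfolding TG_def using i by auto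
  qed
  ultimately show ?thesis by (rule that)
qed

lemma finite_region_vars: "finite (region_vars N)"
proof -
  have "region_vars N \<subseteq> (\<Union>t\<le>N. step_vars t)" by (force simp: region_vars_def step_vars_def)
  then show ?thesis by (rule finite_subset) (simp add: finite_step_vars)
qed

definition step_constraints ::
  "(real^'nx \<Rightarrow> real^'nu \<Rightarrow> real^'nt \<Rightarrow> real^'np \<Rightarrow> real) \<Rightarrow> (real^'nx \<Rightarrow> real^'nu \<Rightarrow> real^'nx)
    \<Rightarrow> (real^'nx \<Rightarrow> real^'nu \<Rightarrow> real^'nt \<Rightarrow> real^'np \<Rightarrow> real^'nt)
    \<Rightarrow> (real^'nx) set \<Rightarrow> (real^'nu) set \<Rightarrow> (real^'nt) set \<Rightarrow> (real^'np) set \<Rightarrow> nat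
    \<Rightarrow> (('nx::finite, 'nu::finite, 'nt::finite, 'np::finite) dvar \<Rightarrow> real) set" where
  "step_constraints f h g X U Th P t = {v. step_domain X U Th P v t
     \<and> (\<forall>u\<in>U. f (h (traj_x v t) u) u (traj_\<theta> v t) (traj_\<pi> v t)
          \<le> f (h (traj_x v t) (traj_u v t)) (traj_u v t) (traj_\<theta> v t) (traj_\<pi> v t))
     \<and> traj_x v (Suc t) = h (traj_x v t) (traj_u v t)
     \<and> traj_\<theta> v (Suc t) = g (traj_x v t) (traj_u v t) (traj_\<theta> v t) (traj_\<pi> v t)}"

lemma feasible_region_eq:
  "feasible_region N f h g X U Th P = (\<Inter>t\<in>{..N}. {v. traj_x v t \<in> X} \<inter> {v. traj_\<theta> v t \<in> Th})
     \<inter> (\<Inter>t\<in>{..<N}. step_constraints f h g X U Th P t)"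
  unfolding feasible_region_def traj_feasible_def step_constraints_def step_domain_def
    traj_x_def traj_u_def traj_\<theta>_def traj_\<pi>_def
  by auto

locale incentive_model =
  fixes X :: "(real^'nx::finite) set" and U :: "(real^'nu::finite) set"
    and Th :: "(real^'nt::finite) set" and P :: "(real^'np::finite) set"
    and f :: "real^'nx \<Rightarrow> real^'nu \<Rightarrow> real^'nt \<Rightarrow> real^'np \<Rightarrow> real"
    and h :: "real^'nx \<Rightarrow> real^'nu \<Rightarrow> real^'nx"
    and g :: "real^'nx \<Rightarrow> real^'nu \<Rightarrow> real^'nt \<Rightarrow> real^'np \<Rightarrow> real^'nt"
    and Q :: "real^('nx + 'nu)^('nx + 'nu)" and H :: "real^('nx + 'nu)^('nt + 'np)"
    and K :: nat and J :: "nat \<Rightarrow> nat set" and F :: "nat \<Rightarrow> nat \<Rightarrow> real^(('nx + 'nu) + ('nt + 'np))"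
    and \<zeta> :: "nat \<Rightarrow> nat \<Rightarrow> real"
    and Ah :: "real^'nx^'nx" and Bh :: "real^'nu^'nx" and kh :: "real^'nx"
    and npc :: nat and Gp :: "nat \<Rightarrow> real^(('nx + 'nu) + ('nt + 'np))^'nt"
    and \<chi>p :: "nat \<Rightarrow> real^'nt" and rows :: "nat \<Rightarrow> nat"
    and Bp :: "nat \<Rightarrow> nat \<Rightarrow> real^(('nx + 'nu) + ('nt + 'np))" and \<psi> :: "nat \<Rightarrow> nat \<Rightarrow> real"
  assumes polyhedron_X: "polyhedron X" and bounded_X: "bounded X"
    and polyhedron_U: "polyhedron U" and bounded_U: "bounded U"
    and polyhedron_Th: "polyhedron Th" and bounded_Th: "bounded Th"
    and milp_P: "milp_set P" and bounded_P: "bounded P"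
    and psd_Q: "psd Q" and J: "\<And>i. i \<in> {1..K} \<Longrightarrow> finite (J i) \<and> J i \<noteq> {}"
    and f_eq: "\<And>x u \<theta> \<pi>. x \<in> X \<Longrightarrow> u \<in> U \<Longrightarrow> \<theta> \<in> Th \<Longrightarrow> \<pi> \<in> P \<Longrightarrow>
        f x u \<theta> \<pi> = - (vcat x u \<bullet> (Q *v vcat x u)) + vcat \<theta> \<pi> \<bullet> (H *v vcat x u)
          + (\<Sum>i\<in>{1..K}. Min ((\<lambda>j. F i j \<bullet> vcat (vcat x u) (vcat \<theta> \<pi>) + \<zeta> i j) ` J i))"
    and h_eq: "\<And>x u. x \<in> X \<Longrightarrow> u \<in> U \<Longrightarrow> h x u = Ah *v x + Bh *v u + kh"
    and h_onto: "(\<lambda>(x, u). h x u) ` (X \<times> U) = X"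
    and g_piece: "\<And>x u \<theta> \<pi> i. x \<in> X \<Longrightarrow> u \<in> U \<Longrightarrow> \<theta> \<in> Th \<Longrightarrow> \<pi> \<in> P \<Longrightarrow> i < npc \<Longrightarrow>
        (\<forall>l<rows i. Bp i l \<bullet> vcat (vcat x u) (vcat \<theta> \<pi>) \<le> \<psi> i l) \<Longrightarrow>
        g x u \<theta> \<pi> = Gp i *v vcat (vcat x u) (vcat \<theta> \<pi>) + \<chi>p i"
    and g_cover: "\<And>x u \<theta> \<pi>. x \<in> X \<Longrightarrow> u \<in> U \<Longrightarrow> \<theta> \<in> Th \<Longrightarrow> \<pi> \<in> P \<Longrightarrow>
        \<exists>i<npc. \<forall>l<rows i. Bp i l \<bullet> vcat (vcat x u) (vcat \<theta> \<pi>) \<le> \<psi> i l"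
    and g_onto: "{g x u \<theta> \<pi> | x u \<theta> \<pi>. x \<in> X \<and> u \<in> U \<and> \<theta> \<in> Th \<and> \<pi> \<in> P} = Th"
begin

definition state_decision :: "real^'nx \<Rightarrow> real^'nu \<Rightarrow> real^('nx + 'nu)" where
  "state_decision x u = vcat (Ah *v x + Bh *v u + kh) u"

definition decision_dir :: "real^'nu \<Rightarrow> real^('nx + 'nu)" where
  "decision_dir d = vcat (Bh *v d) d"

definition payoff :: "real^('nx + 'nu) \<Rightarrow> real^('nt + 'np) \<Rightarrow> real" where
  "payoff z p = - (z \<bullet> (Q *v z)) + p \<bullet> (H *v z) + (\<Sum>i\<in>{1..K}. Min ((\<lambda>j. F i j \<bullet> vcat z p + \<zeta> i j) ` J i))"

definition pieces :: "(nat \<Rightarrow> nat) set" where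
  "pieces = PiE {1..K} J"

definition piece_value :: "real^'nx \<Rightarrow> real^('nt + 'np) \<Rightarrow> (nat \<Rightarrow> nat) \<Rightarrow> real^'nu \<Rightarrow> real" where
  "piece_value x p \<sigma> u = (\<Sum>i\<in>{1..K}. F i (\<sigma> i) \<bullet> vcat (state_decision x u) p + \<zeta> i (\<sigma> i))"

definition piece_slope :: "(nat \<Rightarrow> nat) \<Rightarrow> real^'nu \<Rightarrow> real" where
  "piece_slope \<sigma> d = (\<Sum>i\<in>{1..K}. F i (\<sigma> i) \<bullet> vcat (decision_dir d) (0::real^('nt + 'np)))"

definition payoff_grad :: "real^'nx \<Rightarrow> real^('nt + 'np) \<Rightarrow> real^'nu \<Rightarrow> real^'nu \<Rightarrow> real" where
  "payoff_grad x p u d = - (state_decision x u \<bullet> (Q *v decision_dir d))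
     - (decision_dir d \<bullet> (Q *v state_decision x u)) + p \<bullet> (H *v decision_dir d)"

definition U_rows :: "((real^'nu) \<times> real) set" where
  "U_rows = (SOME R. finite R \<and> U = {u. \<forall>r\<in>R. fst r \<bullet> u \<le> snd r})"

lemma U_rows: "finite U_rows" "u \<in> U \<longleftrightarrow> (\<forall>r\<in>U_rows. fst r \<bullet> u \<le> snd r)"
proof -
  obtain R where "finite R" "U = {u. \<forall>r\<in>R. fst r \<bullet> u \<le> snd r}"
    using polyhedron_U by (rule polyhedron_obtain_rows)
  then have "finite U_rows \<and> U = {u. \<forall>r\<in>U_rows. fst r \<bullet> u \<le> snd r}"
    unfolding U_rows_def by (intro someI[of "\<lambda>R. finite R \<and> U = {u. \<forall>r\<in>R. fst r \<bullet> u \<le> snd r}"]) blast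
  then have "finite U_rows" and U: "U = {u. \<forall>r\<in>U_rows. fst r \<bullet> u \<le> snd r}" by (fact conjunct1 conjunct2)+
  show "finite U_rows" by fact
  show "u \<in> U \<longleftrightarrow> (\<forall>r\<in>U_rows. fst r \<bullet> u \<le> snd r)"
    using eqset_imp_iff[OF U, of u] by (simp only: mem_Collect_eq)
qed

lemma finite_pieces: "finite pieces"
  using J by (auto simp: pieces_def intro!: finite_PiE)

lemma decision_program: "concave_pwl_program
    (\<lambda>u. - (state_decision x u \<bullet> (Q *v state_decision x u)) + p \<bullet> (H *v state_decision x u))
    (payoff_grad x p) (\<lambda>d. decision_dir d \<bullet> (Q *v decision_dir d)) (piece_value x p) piece_slope U_rows pieces"
proof (unfold concave_pwl_program_def, intro conjI allI)
  have z_add: "state_decision x (u + d) = state_decision x u + decision_dir d" for u d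
    unfolding state_decision_def decision_dir_def
    by (simp add: vcat_add[symmetric] matrix_vector_right_distrib algebra_simps)
  have "linear decision_dir"
    by (rule linearI) (simp_all add: decision_dir_def vcat_add[symmetric] vcat_scaleR[symmetric]
        matrix_vector_right_distrib matrix_vector_mult_scaleR)
  note dir = linear_add[OF this] linear_scale[OF this]
  show "finite U_rows" by (fact U_rows(1))
  show "finite pieces" by (fact finite_pieces)
  show "pieces \<noteq> {}" using J by (simp add: pieces_def PiE_eq_empty_iff)
  show "0 \<le> decision_dir d \<bullet> (Q *v decision_dir d)" for d using psd_Q by (simp add: psd_def)
  show "decision_dir (t *\<^sub>R d) \<bullet> (Q *v decision_dir (t *\<^sub>R d)) = t\<^sup>2 * (decision_dir d \<bullet> (Q *v decision_dir d))"
    for t d by (simp add: dir matrix_vector_mult_scaleR power2_eq_square)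
  show "- (state_decision x (u + d) \<bullet> (Q *v state_decision x (u + d))) + p \<bullet> (H *v state_decision x (u + d))
      = - (state_decision x u \<bullet> (Q *v state_decision x u)) + p \<bullet> (H *v state_decision x u)
        + payoff_grad x p u d - decision_dir d \<bullet> (Q *v decision_dir d)" for u d
    unfolding z_add payoff_grad_def
    by (simp add: matrix_vector_right_distrib inner_add_left inner_add_right algebra_simps)
  show "linear (payoff_grad x p u)" for u
    unfolding payoff_grad_def
    by (rule linearI) (simp_all add: dir matrix_vector_right_distrib matrix_vector_mult_scaleR
        inner_add_left inner_add_right algebra_simps)
  show "piece_value x p \<sigma> (u + d) = piece_value x p \<sigma> u + piece_slope \<sigma> d" for \<sigma> u d
    using vcat_add[of "state_decision x u" "decision_dir d" p 0]
    unfolding piece_value_def piece_slope_def z_add by (simp add: inner_add_right sum.distrib algebra_simps)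
  show "linear (piece_slope \<sigma>)" for \<sigma>
    using vcat_add[of "decision_dir a" "decision_dir b" "0::real^('nt + 'np)" 0 for a b]
      vcat_scaleR[of c "decision_dir a" "0::real^('nt + 'np)" for c a]
    unfolding piece_slope_def by (intro linearI) (simp_all add: dir inner_add_right sum.distrib sum_distrib_left)
qed

lemma optimal_decision_iff_kkt:
  assumes "us \<in> U"
  shows "(\<forall>u\<in>U. payoff (state_decision x u) p \<le> payoff (state_decision x us) p) \<longleftrightarrow>
    (\<exists>I A lam mu s. concave_pwl_program.kkt_certificate (payoff_grad x p) (piece_value x p) piece_slope
       U_rows pieces us I A lam mu s)"
proof -
  let ?objective = "concave_pwl_program.objective
    (\<lambda>u. - (state_decision x u \<bullet> (Q *v state_decision x u)) + p \<bullet> (H *v state_decision x u))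
    (piece_value x p) pieces"
  have "payoff (state_decision x u) p = ?objective u" for u
    unfolding concave_pwl_program.objective_def[OF decision_program]
    using sum_Min_PiE[of "{1..K}" J] J by (simp add: payoff_def piece_value_def pieces_def)
  then have "(\<forall>u\<in>U. payoff (state_decision x u) p \<le> payoff (state_decision x us) p) \<longleftrightarrow>
      (\<forall>u. concave_pwl_program.feasible U_rows u \<longrightarrow> ?objective u \<le> ?objective us)"
    by (simp add: concave_pwl_program.feasible_def[OF decision_program] U_rows(2) Ball_def)
  also have "\<dots> \<longleftrightarrow> (\<exists>I A lam mu s. concave_pwl_program.kkt_certificate (payoff_grad x p) (piece_value x p)
      piece_slope U_rows pieces us I A lam mu s)"
    using assms
    by (intro concave_pwl_program.max_iff_kkt[OF decision_program])
       (simp add: concave_pwl_program.feasible_def[OF decision_program] U_rows(2))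
  finally show ?thesis .
qed

text \<open>With the active sets \<open>I\<close>, \<open>A\<close> fixed, the certificate is affine in the modelled variables
  and in its auxiliary variables: the level \<open>s\<close> at index \<open>Inl ()\<close> and the multipliers
  \<open>lam r\<close>, \<open>mu \<sigma>\<close> at indices \<open>Inr (Inl r)\<close>, \<open>Inr (Inr \<sigma>)\<close>.\<close>

lemma affine_system_kkt_certificate:
  fixes x :: "('v \<Rightarrow> real) \<Rightarrow> real^'nx" and us :: "('v \<Rightarrow> real) \<Rightarrow> real^'nu"
    and p :: "('v \<Rightarrow> real) \<Rightarrow> real^('nt + 'np)"
  assumes "I \<subseteq> U_rows" "A \<subseteq> pieces" "finite V" "affine_vec V x" "affine_vec V us" "affine_vec V p"
    and Z: "finite Z" "Inl () \<in> Z" "Inr ` Inl ` I \<subseteq> Z" "Inr ` Inr ` A \<subseteq> Z"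
  shows "affine_system V Z {(v, y). concave_pwl_program.kkt_certificate (payoff_grad (x v) (p v))
    (piece_value (x v) (p v)) piece_slope U_rows pieces (us v) I A
    (\<lambda>r. y (Inr (Inl r))) (\<lambda>\<sigma>. y (Inr (Inr \<sigma>))) (y (Inl ()))}"
proof -
  have fin: "finite I" "finite A" "finite pieces"
    using assms(1,2) U_rows(1) finite_pieces finite_subset by auto
  have lam: "affine_expr Z (\<lambda>y. y (Inr (Inl r)))" if "r \<in> I" for r
    using that Z by (intro affine_expr_var) auto
  have mu: "affine_expr Z (\<lambda>y. y (Inr (Inr \<sigma>)))" if "\<sigma> \<in> A" for \<sigma>
    using that Z by (intro affine_expr_var) auto
  have s: "affine_expr Z (\<lambda>y. y (Inl ()))"
    using Z by (intro affine_expr_var) auto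
  have z: "affine_vec V (\<lambda>v. state_decision (x v) (us v))"
    unfolding state_decision_def using assms(3-5)
    by (intro affine_vec_vcat affine_vec_add affine_vec_matrix_vector_mult affine_vec_const)
  have ell: "affine_expr V (\<lambda>v. piece_value (x v) (p v) \<sigma> (us v))" for \<sigma>
    unfolding piece_value_def using assms(3,6)
    by (intro affine_expr_sum affine_expr_add affine_expr_inner_left affine_vec_vcat affine_expr_const z) simp
  have grad: "affine_expr V (\<lambda>v. payoff_grad (x v) (p v) (us v) b)" for b
    unfolding payoff_grad_def using assms(3,6)
    by (intro affine_expr_add affine_expr_diff affine_expr_minus affine_expr_inner_left affine_expr_inner_right
          affine_vec_matrix_vector_mult z)
  have "affine_system V Z {(v, y). \<forall>r\<in>I. 0 \<le> y (Inr (Inl r)) \<and> fst r \<bullet> us v = snd r}"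
    using assms(3,5)
    by (intro affine_system_ball affine_system_conj affine_system_le affine_system_eq affine_expr2_left
          affine_expr2_right affine_expr_const affine_expr_inner_left lam fin)
  moreover have "affine_system V Z {(v, y). \<forall>\<sigma>\<in>A. 0 \<le> y (Inr (Inr \<sigma>))
      \<and> piece_value (x v) (p v) \<sigma> (us v) = y (Inl ())}"
    by (intro affine_system_ball affine_system_conj affine_system_le affine_system_eq affine_expr2_left
          affine_expr2_right affine_expr_const ell mu s fin)
  moreover have "affine_system V Z {(v, y). \<forall>\<sigma>\<in>pieces. y (Inl ()) \<le> piece_value (x v) (p v) \<sigma> (us v)}"
    by (intro affine_system_ball affine_system_le affine_expr2_left affine_expr2_right ell s fin)
  moreover have "affine_system V Z {(v, y). (\<Sum>\<sigma>\<in>A. y (Inr (Inr \<sigma>))) = 1}"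
    by (intro affine_system_eq affine_expr2_left affine_expr2_right affine_expr_sum affine_expr_const mu fin)
  moreover have "affine_system V Z {(v, y). \<forall>b\<in>Basis. payoff_grad (x v) (p v) (us v) b
      + (\<Sum>\<sigma>\<in>A. y (Inr (Inr \<sigma>)) * piece_slope \<sigma> b) = (\<Sum>r\<in>I. y (Inr (Inl r)) * (fst r \<bullet> b))}"
    by (intro affine_system_ball affine_system_eq affine_expr2_add affine_expr2_left affine_expr2_right
          affine_expr_sum affine_expr_mult_const grad lam mu fin finite_Basis)
  ultimately show ?thesis
    unfolding concave_pwl_program.kkt_certificate_def[OF decision_program]
    by (intro affine_system_conj affine_system_const)
qed

lemma milp_representable_optimal_decision:
  assumes "P \<subseteq> cube B"
  obtains SA where "milp_representable (step_vars t :: ('nx, 'nu, 'nt, 'np) dvar set) SA"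
    "\<And>v. step_domain X U Th P v t \<Longrightarrow> v \<in> SA \<longleftrightarrow> (\<forall>u\<in>U.
       payoff (state_decision (traj_x v t) u) (vcat (traj_\<theta> v t) (traj_\<pi> v t))
       \<le> payoff (state_decision (traj_x v t) (traj_u v t)) (vcat (traj_\<theta> v t) (traj_\<pi> v t)))"
proof -
  let ?p = "\<lambda>v. vcat (traj_\<theta> v t) (traj_\<pi> v t)"
  define KKT where "KKT IA = {(v, y). step_domain X U Th (cube B) v t \<and>
      concave_pwl_program.kkt_certificate (payoff_grad (traj_x v t) (?p v)) (piece_value (traj_x v t) (?p v))
        piece_slope U_rows pieces (traj_u v t) (fst IA) (snd IA)
        (\<lambda>r. y (Inr (Inl r))) (\<lambda>\<sigma>. y (Inr (Inr \<sigma>))) (y (Inl ()))}"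
    for IA and v :: "('nx, 'nu, 'nt, 'np) dvar \<Rightarrow> real" and y :: "unit + (((real^'nu) \<times> real) + (nat \<Rightarrow> nat)) \<Rightarrow> real"
  let ?Z = "{Inl ()} \<union> Inr ` Inl ` U_rows \<union> Inr ` Inr ` pieces"
  obtain M where M: "\<And>v :: ('nx, 'nu, 'nt, 'np) dvar \<Rightarrow> real.
      step_domain X U Th (cube B) v t \<Longrightarrow> \<forall>k\<in>step_vars t. \<bar>v k\<bar> \<le> M"
    using step_domain_bounded[OF bounded_X bounded_U bounded_Th bounded_cube[of B], where t=t] by blast
  have "milp_representable (step_vars t) (\<Union>IA\<in>Pow U_rows \<times> Pow pieces. {v. \<exists>y. (v, y) \<in> KKT IA})"
  proof (rule milp_representable_UN_affine_system[OF finite_step_vars])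
    show "finite ?Z" "finite (Pow U_rows \<times> Pow pieces)" using U_rows(1) finite_pieces by auto
    show "affine_system (step_vars t) ?Z (KKT IA)" if "IA \<in> Pow U_rows \<times> Pow pieces" for IA
      unfolding KKT_def using that finite_step_vars polyhedron_X polyhedron_U polyhedron_Th U_rows(1) finite_pieces
      by (intro affine_system_conj affine_system_step_domain affine_system_kkt_certificate affine_vec_traj
            affine_vec_vcat) (auto simp: step_vars_def)
    show "\<exists>M. \<forall>(v, y)\<in>KKT IA. \<forall>k\<in>step_vars t. \<bar>v k\<bar> \<le> M" for IA
      using M unfolding KKT_def by blast
  qed
  moreover have "v \<in> (\<Union>IA\<in>Pow U_rows \<times> Pow pieces. {v. \<exists>y. (v, y) \<in> KKT IA}) \<longleftrightarrow> (\<forall>u\<in>U.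
      payoff (state_decision (traj_x v t) u) (?p v) \<le> payoff (state_decision (traj_x v t) (traj_u v t)) (?p v))"
    if dom: "step_domain X U Th P v t" for v
  proof -
    let ?kkt = "concave_pwl_program.kkt_certificate (payoff_grad (traj_x v t) (?p v))
      (piece_value (traj_x v t) (?p v)) piece_slope U_rows pieces (traj_u v t)"
    have "step_domain X U Th (cube B) v t" using dom assms by (auto simp: step_domain_def)
    have "v \<in> (\<Union>IA\<in>Pow U_rows \<times> Pow pieces. {v. \<exists>y. (v, y) \<in> KKT IA}) \<longleftrightarrow>
        (\<exists>I A lam mu s. ?kkt I A lam mu s)"
    proof
      assume "v \<in> (\<Union>IA\<in>Pow U_rows \<times> Pow pieces. {v. \<exists>y. (v, y) \<in> KKT IA})"
      then obtain IA y where "(v, y) \<in> KKT IA" by blast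
      then show "\<exists>I A lam mu s. ?kkt I A lam mu s" unfolding KKT_def by blast
    next
      assume "\<exists>I A lam mu s. ?kkt I A lam mu s"
      then obtain I A lam mu s where kkt: "?kkt I A lam mu s" by blast
      then have "(I, A) \<in> Pow U_rows \<times> Pow pieces"
        unfolding concave_pwl_program.kkt_certificate_def[OF decision_program] by simp
      moreover have "(v, case_sum (\<lambda>_. s) (case_sum lam mu)) \<in> KKT (I, A)"
        using kkt \<open>step_domain X U Th (cube B) v t\<close> by (simp add: KKT_def)
      ultimately show "v \<in> (\<Union>IA\<in>Pow U_rows \<times> Pow pieces. {v. \<exists>y. (v, y) \<in> KKT IA})" by blast
    qed
    also have "\<dots> \<longleftrightarrow> (\<forall>u\<in>U. payoff (state_decision (traj_x v t) u) (?p v)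
        \<le> payoff (state_decision (traj_x v t) (traj_u v t)) (?p v))"
      using dom by (intro optimal_decision_iff_kkt[symmetric]) (simp add: step_domain_def)
    finally show ?thesis .
  qed
  ultimately show ?thesis by (rule that)
qed

lemma f_h_eq_payoff:
  assumes "x \<in> X" "u \<in> U" "\<theta> \<in> Th" "\<pi> \<in> P"
  shows "f (h x u) u \<theta> \<pi> = payoff (state_decision x u) (vcat \<theta> \<pi>)"
proof -
  have "h x u \<in> X" using h_onto assms(1,2) by blast
  then show ?thesis
    using f_eq[OF _ assms(2-4)] h_eq[OF assms(1,2)] by (simp add: payoff_def state_decision_def)
qed

lemma g_into: "x \<in> X \<Longrightarrow> u \<in> U \<Longrightarrow> \<theta> \<in> Th \<Longrightarrow> \<pi> \<in> P \<Longrightarrow> g x u \<theta> \<pi> \<in> Th"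
  using g_onto by blast

lemma milp_representable_step_constraints:
  "milp_representable (step_vars t \<union> range (VX (Suc t)) \<union> range (VT (Suc t)) :: ('nx, 'nu, 'nt, 'np) dvar set)
     (step_constraints f h g X U Th P t)"
proof -
  let ?V = "step_vars t \<union> range (VX (Suc t)) \<union> range (VT (Suc t)) :: ('nx, 'nu, 'nt, 'np) dvar set"
  have "finite ?V" by (simp add: finite_step_vars)
  obtain B where "P \<subseteq> cube B" using bounded_P by (rule bounded_subset_cube)
  obtain SA where SA: "milp_representable (step_vars t :: ('nx, 'nu, 'nt, 'np) dvar set) SA"
    "\<And>v. step_domain X U Th P v t \<Longrightarrow> v \<in> SA \<longleftrightarrow> (\<forall>u\<in>U.
       payoff (state_decision (traj_x v t) u) (vcat (traj_\<theta> v t) (traj_\<pi> v t))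
       \<le> payoff (state_decision (traj_x v t) (traj_u v t)) (vcat (traj_\<theta> v t) (traj_\<pi> v t)))"
    using milp_representable_optimal_decision[OF \<open>P \<subseteq> cube B\<close>, where t=t] by blast
  obtain SG where SG: "milp_representable (step_vars t \<union> range (VT (Suc t)) :: ('nx, 'nu, 'nt, 'np) dvar set) SG"
    "\<And>v. step_domain X U Th P v t \<Longrightarrow>
       v \<in> SG \<longleftrightarrow> traj_\<theta> v (Suc t) = g (traj_x v t) (traj_u v t) (traj_\<theta> v t) (traj_\<pi> v t)"
    using milp_representable_piecewise_affine_update[where npc=npc and rows=rows and Bp=Bp and \<psi>=\<psi>
        and Gp=Gp and \<chi>p=\<chi>p and t=t, OF polyhedron_X polyhedron_U polyhedron_Th bounded_X bounded_U
        bounded_Th \<open>P \<subseteq> cube B\<close> g_piece g_cover g_into] by blast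
  let ?SH = "{v. traj_x v (Suc t) = Ah *v traj_x v t + Bh *v traj_u v t + kh}"
  have "step_constraints f h g X U Th P t = {v. traj_x v t \<in> X} \<inter> {v. traj_u v t \<in> U}
      \<inter> {v. traj_\<theta> v t \<in> Th} \<inter> {v. traj_\<pi> v t \<in> P} \<inter> SA \<inter> ?SH \<inter> SG"
  proof (rule set_eqI)
    fix v
    show "v \<in> step_constraints f h g X U Th P t \<longleftrightarrow> v \<in> {v. traj_x v t \<in> X} \<inter> {v. traj_u v t \<in> U}
      \<inter> {v. traj_\<theta> v t \<in> Th} \<inter> {v. traj_\<pi> v t \<in> P} \<inter> SA \<inter> ?SH \<inter> SG"
    proof (cases "step_domain X U Th P v t")
      case True
      then have dom: "traj_x v t \<in> X" "traj_u v t \<in> U" "traj_\<theta> v t \<in> Th" "traj_\<pi> v t \<in> P"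
        by (simp_all add: step_domain_def)
      have opt: "(\<forall>u\<in>U. f (h (traj_x v t) u) u (traj_\<theta> v t) (traj_\<pi> v t)
            \<le> f (h (traj_x v t) (traj_u v t)) (traj_u v t) (traj_\<theta> v t) (traj_\<pi> v t)) \<longleftrightarrow> v \<in> SA"
        unfolding SA(2)[OF True] using dom by (intro ball_cong refl) (simp add: f_h_eq_payoff)
      have "h (traj_x v t) (traj_u v t) = Ah *v traj_x v t + Bh *v traj_u v t + kh"
        using dom by (simp add: h_eq)
      then show ?thesis
        unfolding step_constraints_def mem_Collect_eq opt using True dom by (simp add: SG(2)[OF True])
    qed (auto simp: step_constraints_def step_domain_def)
  qed
  moreover have "milp_representable ?V {v. traj_x v t \<in> X}"
    by (rule milp_representable_polyhedron[OF polyhedron_X \<open>finite ?V\<close> affine_vec_traj(1)])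
      (auto simp: step_vars_def)
  moreover have "milp_representable ?V {v. traj_u v t \<in> U}"
    by (rule milp_representable_polyhedron[OF polyhedron_U \<open>finite ?V\<close> affine_vec_traj(2)])
      (auto simp: step_vars_def)
  moreover have "milp_representable ?V {v. traj_\<theta> v t \<in> Th}"
    by (rule milp_representable_polyhedron[OF polyhedron_Th \<open>finite ?V\<close> affine_vec_traj(3)])
      (auto simp: step_vars_def)
  moreover have "milp_representable ?V {v. traj_\<pi> v t \<in> P}"
  proof (rule milp_representable_mono_vars[OF _ _ \<open>finite ?V\<close>])
    show "milp_representable (range (VP t)) {v. traj_\<pi> v t \<in> P}"
      unfolding traj_\<pi>_def by (rule milp_representable_milp_set[OF _ milp_P]) (simp add: inj_def)
  qed (auto simp: step_vars_def)
  moreover have "milp_representable ?V SA"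
    by (rule milp_representable_mono_vars[OF SA(1) _ \<open>finite ?V\<close>]) auto
  moreover have "milp_representable ?V ?SH"
    by (rule milp_representable_mono_vars[OF milp_representable_affine_update _ \<open>finite ?V\<close>]) auto
  moreover have "milp_representable ?V SG"
    by (rule milp_representable_mono_vars[OF SG(1) _ \<open>finite ?V\<close>]) auto
  ultimately show ?thesis by (simp add: milp_representable_Int)
qed

end

theorem proposition1:
  fixes X :: "(real^'nx::finite) set" and U :: "(real^'nu::finite) set"
    and Th :: "(real^'nt::finite) set" and P :: "(real^'np::finite) set"
    and f :: "real^'nx \<Rightarrow> real^'nu \<Rightarrow> real^'nt \<Rightarrow> real^'np \<Rightarrow> real"
    and h :: "real^'nx \<Rightarrow> real^'nu \<Rightarrow> real^'nx"
    and g :: "real^'nx \<Rightarrow> real^'nu \<Rightarrow> real^'nt \<Rightarrow> real^'np \<Rightarrow> real^'nt"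
    and Q :: "real^('nx + 'nu)^('nx + 'nu)"
    and H :: "real^('nx + 'nu)^('nt + 'np)"
    and K :: nat and J :: "nat \<Rightarrow> nat set"
    and F :: "nat \<Rightarrow> nat \<Rightarrow> real^(('nx + 'nu) + ('nt + 'np))"
    and \<zeta> :: "nat \<Rightarrow> nat \<Rightarrow> real"
    and Ah :: "real^'nx^'nx" and Bh :: "real^'nu^'nx" and kh :: "real^'nx"
    and npc :: nat and Gp :: "nat \<Rightarrow> real^(('nx + 'nu) + ('nt + 'np))^'nt"
    and \<chi>p :: "nat \<Rightarrow> real^'nt" and rows :: "nat \<Rightarrow> nat"
    and Bp :: "nat \<Rightarrow> nat \<Rightarrow> real^(('nx + 'nu) + ('nt + 'np))"
    and \<psi> :: "nat \<Rightarrow> nat \<Rightarrow> real"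
    and M :: "'w measure"
    and nnx nnu :: nat
    and D :: "real^'nx^'dx::finite" and C :: "real^'nu^'dy::finite"
    and \<nu> :: "nat \<Rightarrow> 'w \<Rightarrow> real^'dx" and \<omega> :: "nat \<Rightarrow> 'w \<Rightarrow> real^'dy"
    and p\<nu> :: "real^'dx \<Rightarrow> real" and p\<omega> :: "real^'dy \<Rightarrow> real"
    and N :: nat
  assumes
    \<comment> \<open>(A1)\<close>
    A1_X: "polyhedron X" "bounded X" "compact X" "convex X"
    and A1_U: "polyhedron U" "bounded U" "compact U" "convex U"
    and A1_Th: "polyhedron Th" "bounded Th" "compact Th" "convex Th"
    and A1_P: "milp_set P" "bounded P" "compact P"
    \<comment> \<open>(A2)\<close>
    and A2_Q: "psd Q"
    and A2_J: "\<And>i. i \<in> {1..K} \<Longrightarrow> finite (J i) \<and> J i \<noteq> {}"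
    and A2_f: "\<And>x u \<theta> \<pi>. x \<in> X \<Longrightarrow> u \<in> U \<Longrightarrow> \<theta> \<in> Th \<Longrightarrow> \<pi> \<in> P \<Longrightarrow>
        f x u \<theta> \<pi> = - (vcat x u \<bullet> (Q *v vcat x u)) + vcat \<theta> \<pi> \<bullet> (H *v vcat x u)
          + (\<Sum>i\<in>{1..K}. Min ((\<lambda>j. F i j \<bullet> vcat (vcat x u) (vcat \<theta> \<pi>) + \<zeta> i j) ` J i))"
    and A2_cx: "\<And>u \<theta> \<pi>. u \<in> U \<Longrightarrow> \<theta> \<in> Th \<Longrightarrow> \<pi> \<in> P \<Longrightarrow> concave_on X (\<lambda>x. f x u \<theta> \<pi>)"
    and A2_cu: "\<And>x \<theta> \<pi>. x \<in> X \<Longrightarrow> \<theta> \<in> Th \<Longrightarrow> \<pi> \<in> P \<Longrightarrow> strict_concave_on U (\<lambda>u. f x u \<theta> \<pi>)"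
    and A2_ct: "\<And>x u \<pi>. x \<in> X \<Longrightarrow> u \<in> U \<Longrightarrow> \<pi> \<in> P \<Longrightarrow> concave_on Th (\<lambda>\<theta>. f x u \<theta> \<pi>)"
    \<comment> \<open>(A3)\<close>
    and A3_h: "\<And>x u. x \<in> X \<Longrightarrow> u \<in> U \<Longrightarrow> h x u = Ah *v x + Bh *v u + kh"
    and A3_h_onto: "(\<lambda>(x, u). h x u) ` (X \<times> U) = X"
    and A3_g: "\<And>x u \<theta> \<pi> i. x \<in> X \<Longrightarrow> u \<in> U \<Longrightarrow> \<theta> \<in> Th \<Longrightarrow> \<pi> \<in> P \<Longrightarrow> i < npc \<Longrightarrow>
        (\<forall>l<rows i. Bp i l \<bullet> vcat (vcat x u) (vcat \<theta> \<pi>) \<le> \<psi> i l) \<Longrightarrow>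
        g x u \<theta> \<pi> = Gp i *v vcat (vcat x u) (vcat \<theta> \<pi>) + \<chi>p i"
    and A3_g_cover: "\<And>x u \<theta> \<pi>. x \<in> X \<Longrightarrow> u \<in> U \<Longrightarrow> \<theta> \<in> Th \<Longrightarrow> \<pi> \<in> P \<Longrightarrow>
        \<exists>i<npc. \<forall>l<rows i. Bp i l \<bullet> vcat (vcat x u) (vcat \<theta> \<pi>) \<le> \<psi> i l"
    and A3_g_disj: "\<And>i j. i < npc \<Longrightarrow> j < npc \<Longrightarrow> i \<noteq> j \<Longrightarrow>
        interior {z. \<forall>l<rows i. Bp i l \<bullet> z \<le> \<psi> i l}
          \<inter> interior {z. \<forall>l<rows j. Bp j l \<bullet> z \<le> \<psi> j l} = {}"
    and A3_g_onto: "{g x u \<theta> \<pi> | x u \<theta> \<pi>. x \<in> X \<and> u \<in> U \<and> \<theta> \<in> Th \<and> \<pi> \<in> P} = Th"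
    \<comment> \<open>(A4)\<close>
    and A4_M: "prob_space M"
    and A4_nu_indep: "prob_space.indep_vars M (\<lambda>_. borel) \<nu> {..nnx}"
    and A4_nu_dist: "\<And>i. i \<le> nnx \<Longrightarrow> distributed M lborel (\<nu> i) (\<lambda>e. ennreal (p\<nu> e))"
    and A4_nu_comp: "\<And>i. i \<le> nnx \<Longrightarrow>
        prob_space.indep_vars M (\<lambda>_. borel) (\<lambda>k w. \<nu> i w $ k) UNIV \<and>
        (\<forall>k k'. distr M borel (\<lambda>w. \<nu> i w $ k) = distr M borel (\<lambda>w. \<nu> i w $ k'))"
    and A4_nu_mom: "\<And>i k. i \<le> nnx \<Longrightarrow>
        prob_space.expectation M (\<lambda>w. \<nu> i w $ k) = 0 \<and> integrable M (\<lambda>w. (\<nu> i w $ k)^2)"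
    and A4_om_indep: "prob_space.indep_vars M (\<lambda>_. borel) \<omega> {..nnu}"
    and A4_om_dist: "\<And>i. i \<le> nnu \<Longrightarrow> distributed M lborel (\<omega> i) (\<lambda>e. ennreal (p\<omega> e))"
    and A4_om_comp: "\<And>i. i \<le> nnu \<Longrightarrow>
        prob_space.indep_vars M (\<lambda>_. borel) (\<lambda>k w. \<omega> i w $ k) UNIV \<and>
        (\<forall>k k'. distr M borel (\<lambda>w. \<omega> i w $ k) = distr M borel (\<lambda>w. \<omega> i w $ k'))"
    and A4_om_mom: "\<And>i k. i \<le> nnu \<Longrightarrow>
        prob_space.expectation M (\<lambda>w. \<omega> i w $ k) = 0 \<and> integrable M (\<lambda>w. (\<omega> i w $ k)^2)"
    and A4_log: "milp_set (log_hypograph p\<nu>)" "milp_set (log_hypograph p\<omega>)"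
    \<comment> \<open>(A5)\<close>
    and A5: "\<exists>T \<pi>s. (\<forall>t<T. \<pi>s t \<in> P) \<and>
        (\<forall>xs us ths xs' us' ths'.
           traj_feasible T f h g X U Th P xs us ths \<pi>s \<and>
           traj_feasible T f h g X U Th P xs' us' ths' \<pi>s \<and>
           (\<forall>t\<le>T. D *v xs t = D *v xs' t) \<and> (\<forall>t<T. C *v us t = C *v us' t)
           \<longrightarrow> xs 0 = xs' 0 \<and> ths 0 = ths' 0)"
  shows "milp_representable (region_vars N) (feasible_region N f h g X U Th P)"
proof -
  interpret incentive_model X U Th P f h g Q H K J F \<zeta> Ah Bh kh npc Gp \<chi>p rows Bp \<psi>
    by unfold_locales (fact assms)+
  let ?R = "region_vars N :: ('nx, 'nu, 'nt, 'np) dvar set"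
  have state: "milp_representable ?R ({v. traj_x v t \<in> X} \<inter> {v. traj_\<theta> v t \<in> Th})" if "t \<in> {..N}" for t
    using that finite_region_vars
    by (intro milp_representable_Int milp_representable_polyhedron polyhedron_X polyhedron_Th affine_vec_traj)
       (auto simp: region_vars_def)
  have step: "milp_representable ?R (step_constraints f h g X U Th P t)" if "t \<in> {..<N}" for t
    using that finite_region_vars
    by (intro milp_representable_mono_vars[OF milp_representable_step_constraints])
       (auto simp: region_vars_def step_vars_def)
  show ?thesis
    unfolding feasible_region_eq
    by (rule milp_representable_Int[OF milp_representable_INT milp_representable_INT])
       (simp_all add: finite_region_vars state step)
qed

end
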